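(* Let $0<p\le1$ and let $\phi$ be an Orlicz function with $\alpha_\phi>0$. The following are equivalent: (i) $\phi$ satisfies condition $\Delta^{*p}$; (ii) the Orlicz space $L_\phi$ is $p$-normable; (iii) $L_\phi$ has type $p$.
   Context: $(\Omega,\Sigma,\mu)$ is one of: (A) a non-atomic measure space with $\mu(\Omega)=\infty$; (B) a non-atomic measure space with $\mu(\Omega)<\infty$; (C) $\mathbb{N}$ with counting measure. Growth conditions and indices are taken for all arguments in case (A), for large arguments in case (B), and for small arguments in case (C). An Orlicz function is $\phi:[0,\infty)\to[0,\infty)$ with $\phi(0)=0$, strictly increasing, continuous, $\lim_{u\to\infty}\phi(u)=\infty$. $\phi\in\Delta^{*p}$ means there exist $K>0$ (and $v\ge0$ in case (B), $v>0$ in case (C)) with $\phi(au)\ge Ka^p\phi(u)$ for all $a\ge1$ and all $u\ge0$ (A), $u\ge v$ (B), $au\le v$ (C). $\alpha_\phi=\sup\{r:\exists c>0$ (and $v$) with $\phi(au)\ge ca^r\phi(u)$ for all $a\ge1$ and $u\ge0$ (A), $u\ge v$ (B), $0<u\le au\le v$ (C)$\}$. $L_\phi$ is the set of measurable $f$ with $\int\phi(\lambda|f|)\,d\mu<\infty$ for some $\lambda>0$, quasi-normed by $\|f\|=\inf\{\varepsilon>0:\int\phi(|f|/\varepsilon)\,d\mu\le1\}$. A quasi-Banach space is $p$-normable if there is $C>0$ with $\|x_1+\dots+x_n\|\le C(\|x_1\|^p+\dots+\|x_n\|^p)^{1/p}$ for all $x_1,\dots,x_n$, $n\in\mathbb{N}$.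 With Rademacher functions $r_k(t)=\operatorname{sign}(\sin2^k\pi t)$, $X$ has type $p$ if there is $K>0$ with $\int_0^1\|\sum_{k=1}^n r_k(t)x_k\|\,dt\le K(\sum_{k=1}^n\|x_k\|^p)^{1/p}$ for all $x_1,\dots,x_n\in X$. *)

theory Defs
  imports "HOL-Analysis.Analysis"
begin

datatype mcase = CaseA | CaseB | CaseC

definition nonatomic :: "'a measure \<Rightarrow> bool" where
  "nonatomic M \<longleftrightarrow> (\<forall>A\<in>sets M. emeasure M A > 0 \<longrightarrow>
      (\<exists>B\<in>sets M. B \<subseteq> A \<and> 0 < emeasure M B \<and> emeasure M B < emeasure M A))"

text \<open>Case (C): M is (isomorphic to) the counting measure on the naturals.\<close>
definition measure_setting :: "mcase \<Rightarrow> 'a measure \<Rightarrow> bool" where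
  "measure_setting c M = (case c of
      CaseA \<Rightarrow> nonatomic M \<and> emeasure M (space M) = \<infinity>
    | CaseB \<Rightarrow> nonatomic M \<and> 0 < emeasure M (space M) \<and> emeasure M (space M) < \<infinity>
    | CaseC \<Rightarrow> (\<exists>g :: nat \<Rightarrow> 'a. bij g) \<and> M = count_space UNIV)"

definition orlicz_function :: "(real \<Rightarrow> real) \<Rightarrow> bool" where
  "orlicz_function \<phi> \<longleftrightarrow> \<phi> 0 = 0 \<and> strict_mono_on {0..} \<phi> \<and> continuous_on {0..} \<phi>
      \<and> filterlim \<phi> at_top at_top"

definition growth_cond :: "mcase \<Rightarrow> (real \<Rightarrow> real) \<Rightarrow> real \<Rightarrow> real \<Rightarrow> bool" where
  "growth_cond c \<phi> K r = (case c of
      CaseA \<Rightarrow> (\<forall>a\<ge>1. \<forall>u\<ge>0. \<phi> (a * u) \<ge> K * a powr r * \<phi> u)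
    | CaseB \<Rightarrow> (\<exists>v\<ge>0. \<forall>a\<ge>1. \<forall>u\<ge>v. \<phi> (a * u) \<ge> K * a powr r * \<phi> u)
    | CaseC \<Rightarrow> (\<exists>v>0. \<forall>a\<ge>1. \<forall>u>0. a * u \<le> v \<longrightarrow> \<phi> (a * u) \<ge> K * a powr r * \<phi> u))"

definition delta_star :: "mcase \<Rightarrow> real \<Rightarrow> (real \<Rightarrow> real) \<Rightarrow> bool" where
  "delta_star c p \<phi> \<longleftrightarrow> (\<exists>K>0. growth_cond c \<phi> K p)"

definition alpha_index :: "mcase \<Rightarrow> (real \<Rightarrow> real) \<Rightarrow> ereal" where
  "alpha_index c \<phi> = Sup (ereal ` {r. \<exists>C>0. growth_cond c \<phi> C r})"

definition orlicz_space :: "'a measure \<Rightarrow> (real \<Rightarrow> real) \<Rightarrow> ('a \<Rightarrow> real) set" where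
  "orlicz_space M \<phi> = {f \<in> borel_measurable M.
      \<exists>l>0. (\<integral>\<^sup>+ x. ennreal (\<phi> (l * \<bar>f x\<bar>)) \<partial>M) < \<infinity>}"

definition orlicz_norm :: "'a measure \<Rightarrow> (real \<Rightarrow> real) \<Rightarrow> ('a \<Rightarrow> real) \<Rightarrow> real" where
  "orlicz_norm M \<phi> f = Inf {\<epsilon>. \<epsilon> > 0 \<and> (\<integral>\<^sup>+ x. ennreal (\<phi> (\<bar>f x\<bar> / \<epsilon>)) \<partial>M) \<le> 1}"

definition p_normable :: "('a \<Rightarrow> real) set \<Rightarrow> (('a \<Rightarrow> real) \<Rightarrow> real) \<Rightarrow> real \<Rightarrow> bool" where
  "p_normable X nrm p \<longleftrightarrow> (\<exists>C>0. \<forall>n::nat. \<forall>x::nat \<Rightarrow> 'a \<Rightarrow> real.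
      (\<forall>k\<in>{1..n}. x k \<in> X) \<longrightarrow>
      nrm (\<lambda>\<omega>. \<Sum>k=1..n. x k \<omega>) \<le> C * (\<Sum>k=1..n. nrm (x k) powr p) powr (1 / p))"

definition rademacher :: "nat \<Rightarrow> real \<Rightarrow> real" where
  "rademacher k t = sgn (sin (2 ^ k * pi * t))"

definition has_type :: "('a \<Rightarrow> real) set \<Rightarrow> (('a \<Rightarrow> real) \<Rightarrow> real) \<Rightarrow> real \<Rightarrow> bool" where
  "has_type X nrm p \<longleftrightarrow> (\<exists>K>0. \<forall>n::nat. \<forall>x::nat \<Rightarrow> 'a \<Rightarrow> real.
      (\<forall>k\<in>{1..n}. x k \<in> X) \<longrightarrow>
      (\<integral>\<^sup>+ t. ennreal (nrm (\<lambda>\<omega>. \<Sum>k=1..n. rademacher k t * x k \<omega>)) * indicator {0..1} t \<partial>lborel)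
        \<le> ennreal (K * (\<Sum>k=1..n. nrm (x k) powr p) powr (1 / p)))"

end

theory Submission
  imports Defs
begin

text \<open>
  Write the condition \<Delta>^(*p) as K (w/u)^p \<phi>(u) \<le> \<phi>(w) for u \<le> w in the relevant range of
  arguments.

  (i) \<Longrightarrow> (ii): such a \<phi> satisfies the Jensen-type inequality
  \<phi>((K^2/4 \<Sum>_k \<theta>_k z_k^p)^(1/p)) \<le> (\<Sum>_k \<theta>_k \<phi>(z_k))/2 + \<phi>(v) for convex weights \<theta>_k:
  half of the p-th power mean is carried by the z_k above the level u with u^p equal to half
  the mean, and growth from u bounds their contribution from below. With \<theta>_k proportional to
  l_k^p, z_k = |x_k|/l_k and the subadditivity of t^p, integration bounds the modular of \<Sum>_k x_k
  at scale (4/K^2)^(1/p) (\<Sum>_k l_k^p)^(1/p) by 1, provided \<phi>(v) \<mu>(\<Omega>) \<le> 1/2; on finite measure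
  spaces v is chosen small. For sequences growth is only known near 0, but the unit ball of the
  modular consists of bounded sequences, and growth extends to any bounded range with a worse
  constant.

  (ii) \<Longrightarrow> (iii): the Rademacher functions have modulus 1 almost everywhere and the quasi-norm
  only depends on |f|.

  (iii) \<Longrightarrow> (i): for n disjoint sets of measure about 1/\<phi>(s) (found by exhaustion in the
  nonatomic case, blocks of consecutive points for sequences) every Rademacher sum of their
  indicators has the norm of the indicator of the union. Type p therefore gives
  \<phi>(s / (L n^(1/p))) \<le> 2 \<phi>(s)/n, and s = a u, n = \<lfloor>(a/L)^p\<rfloor> yield
  \<phi>(a u) \<ge> a^p \<phi>(u) / (4 L^p). On finite measure spaces only n \<le> \<mu>(\<Omega>) \<phi>(a u) pieces fit,
  which suffices as soon as \<phi>(u) > 4/\<mu>(\<Omega>).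
\<close>

section \<open>Orlicz functions and the Luxemburg quasi-norm\<close>

lemma orlicz_function_zero: "orlicz_function \<phi> \<Longrightarrow> \<phi> 0 = 0"
  by (simp add: orlicz_function_def)

lemma orlicz_function_less:
  assumes "orlicz_function \<phi>" "0 \<le> x" "x < y"
  shows "\<phi> x < \<phi> y"
  using assms unfolding orlicz_function_def strict_mono_on_def by auto

lemma orlicz_function_mono:
  assumes "orlicz_function \<phi>" "0 \<le> x" "x \<le> y"
  shows "\<phi> x \<le> \<phi> y"
  using orlicz_function_less[OF assms(1,2), of y] assms(3) by (cases "x = y") auto

lemma orlicz_function_le_iff:
  assumes "orlicz_function \<phi>" "0 \<le> x" "0 \<le> y"
  shows "\<phi> x \<le> \<phi> y \<longleftrightarrow> x \<le> y"
  using orlicz_function_less[OF assms(1,3), of x] orlicz_function_mono[OF assms(1,2), of y] by force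

lemma orlicz_function_nonneg: "orlicz_function \<phi> \<Longrightarrow> 0 \<le> x \<Longrightarrow> 0 \<le> \<phi> x"
  using orlicz_function_mono[of \<phi> 0 x] by (simp add: orlicz_function_zero)

lemma orlicz_function_pos: "orlicz_function \<phi> \<Longrightarrow> 0 < x \<Longrightarrow> 0 < \<phi> x"
  using orlicz_function_less[of \<phi> 0 x] by (simp add: orlicz_function_zero)

lemma borel_measurable_orlicz_comp:
  assumes "orlicz_function \<phi>" "g \<in> borel_measurable M" "\<And>x. 0 \<le> g x"
  shows "(\<lambda>x. \<phi> (g x)) \<in> borel_measurable M"
proof -
  have "continuous_on {0..} \<phi>" using assms(1) by (simp add: orlicz_function_def)
  then have "continuous_on UNIV (\<lambda>x. \<phi> (max 0 x))"
    by (rule continuous_on_compose2) (auto intro!: continuous_intros)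
  from borel_measurable_continuous_on[OF this assms(2)] show ?thesis
    using assms(3) by (simp add: max_absorb2)
qed

lemma orlicz_function_small:
  assumes "orlicz_function \<phi>" "0 < e"
  obtains d where "0 < d" "\<And>x. 0 \<le> x \<Longrightarrow> x \<le> d \<Longrightarrow> \<phi> x < e"
proof -
  have "(\<phi> \<longlongrightarrow> \<phi> 0) (at 0 within {0..})"
    using assms(1) unfolding orlicz_function_def continuous_on_def by blast
  then have "(\<phi> \<longlongrightarrow> \<phi> 0) (at_right 0)"
    by (rule tendsto_within_subset) auto
  then have "\<forall>\<^sub>F x in at_right 0. \<phi> x < e"
    using assms by (auto simp: orlicz_function_zero order_tendsto_iff)
  then obtain d where "0 < d" "\<And>x. 0 < x \<Longrightarrow> x < d \<Longrightarrow> \<phi> x < e"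
    by (auto simp: eventually_at_right_field)
  then show thesis
    using assms by (intro that[of "d / 2"]) (auto simp: orlicz_function_zero le_less)
qed

lemma orlicz_function_large:
  assumes "orlicz_function \<phi>"
  obtains v where "0 < v" "B < \<phi> v"
proof -
  have "\<forall>\<^sub>F x in at_top. B < \<phi> x"
    using assms by (simp add: orlicz_function_def filterlim_at_top_dense)
  then obtain x0 where "\<And>x. x0 \<le> x \<Longrightarrow> B < \<phi> x" by (auto simp: eventually_at_top_linorder)
  then show thesis by (intro that[of "max 1 x0"]) auto
qed

abbreviation orlicz_modular :: "'a measure \<Rightarrow> (real \<Rightarrow> real) \<Rightarrow> ('a \<Rightarrow> real) \<Rightarrow> real \<Rightarrow> ennreal"
  where "orlicz_modular M \<phi> f \<epsilon> \<equiv> \<integral>\<^sup>+ x. ennreal (\<phi> (\<bar>f x\<bar> / \<epsilon>)) \<partial>M"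

lemma orlicz_norm_cong_abs:
  "(\<And>x. \<bar>f x\<bar> = \<bar>g x\<bar>) \<Longrightarrow> orlicz_norm M \<phi> f = orlicz_norm M \<phi> g"
  unfolding orlicz_norm_def by simp

lemma orlicz_norm_le: "0 < e \<Longrightarrow> orlicz_modular M \<phi> f e \<le> 1 \<Longrightarrow> orlicz_norm M \<phi> f \<le> e"
  unfolding orlicz_norm_def by (rule cInf_lower) (auto intro: bdd_belowI[of _ 0])

lemma orlicz_modular_antimono:
  assumes "orlicz_function \<phi>" "0 < e" "e \<le> e'"
  shows "orlicz_modular M \<phi> f e' \<le> orlicz_modular M \<phi> f e"
  using assms
  by (intro nn_integral_mono ennreal_leI orlicz_function_mono[OF assms(1)] divide_left_mono) auto

lemma orlicz_space_modular_le_1: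
  assumes \<phi>: "orlicz_function \<phi>" and f: "f \<in> orlicz_space M \<phi>"
  obtains e where "0 < e" "orlicz_modular M \<phi> f e \<le> 1"
proof -
  obtain l where f_meas: "f \<in> borel_measurable M" and l: "0 < l"
    and fin: "(\<integral>\<^sup>+ x. ennreal (\<phi> (l * \<bar>f x\<bar>)) \<partial>M) < \<infinity>"
    using f unfolding orlicz_space_def by auto
  define e where "e i = real (Suc i) / l" for i
  define F where "F i x = ennreal (\<phi> (\<bar>f x\<bar> / e i))" for i x
  have e: "0 < e i" "e i \<le> e (Suc i)" for i
    using l by (auto simp: e_def divide_right_mono)
  have "decseq F"
    unfolding F_def using e
    by (intro decseq_SucI le_funI ennreal_leI orlicz_function_mono[OF \<phi>] divide_left_mono mult_pos_pos)
      (auto simp: less_imp_le)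
  moreover have "F i \<in> borel_measurable M" for i
    unfolding F_def using e(1)[of i] f_meas
    by (intro measurable_compose[OF _ measurable_ennreal] borel_measurable_orlicz_comp[OF \<phi>]) auto
  moreover have "integral\<^sup>N M (F i) < \<infinity>" for i
  proof -
    have "integral\<^sup>N M (F i) \<le> orlicz_modular M \<phi> f (e 0)"
      unfolding F_def using l by (intro orlicz_modular_antimono[OF \<phi>]) (auto simp: e_def divide_right_mono)
    also have "\<dots> = (\<integral>\<^sup>+ x. ennreal (\<phi> (l * \<bar>f x\<bar>)) \<partial>M)"
      by (simp add: e_def mult.commute)
    finally show ?thesis using fin by (simp add: le_less_trans)
  qed
  ultimately have "(\<integral>\<^sup>+ x. (INF i. F i x) \<partial>M) = (INF i. integral\<^sup>N M (F i))"
    by (rule nn_integral_monotone_convergence_INF_decseq)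
  moreover have "(INF i. F i x) = 0" for x
  proof -
    have cont: "continuous_on {0..} \<phi>" using \<phi> by (simp add: orlicz_function_def)
    have "(\<lambda>i. \<bar>f x\<bar> * l / real (Suc i)) \<longlonglongrightarrow> 0"
      by (intro tendsto_divide_0[OF tendsto_const] filterlim_at_top_imp_at_infinity
          filterlim_compose[OF filterlim_real_sequentially filterlim_Suc])
    from continuous_on_tendsto_compose[OF cont this]
    have "(\<lambda>i. \<phi> (\<bar>f x\<bar> * l / real (Suc i))) \<longlonglongrightarrow> \<phi> 0"
      using l by (auto intro!: always_eventually)
    then have "(\<lambda>i. F i x) \<longlonglongrightarrow> 0"
      using tendsto_ennrealI by (force simp: F_def e_def orlicz_function_zero[OF \<phi>])
    moreover have "(\<lambda>i. F i x) \<longlonglongrightarrow> (INF i. F i x)"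
      using \<open>decseq F\<close> by (intro LIMSEQ_INF) (auto simp: decseq_def monotone_def le_fun_def)
    ultimately show ?thesis using LIMSEQ_unique by blast
  qed
  ultimately have "(INF i. integral\<^sup>N M (F i)) < 1" by simp
  then obtain i where "integral\<^sup>N M (F i) < 1" by (auto simp: INF_less_iff)
  then show thesis using e(1) by (intro that[of "e i"]) (auto simp: F_def[abs_def])
qed

lemma orlicz_norm_nonneg:
  assumes "orlicz_function \<phi>" "f \<in> orlicz_space M \<phi>"
  shows "0 \<le> orlicz_norm M \<phi> f"
proof -
  obtain e where "0 < e" "orlicz_modular M \<phi> f e \<le> 1"
    using orlicz_space_modular_le_1[OF assms] .
  then show ?thesis unfolding orlicz_norm_def by (auto intro!: cInf_greatest)
qed

lemma orlicz_modular_le_1: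
  assumes \<phi>: "orlicz_function \<phi>" and f: "f \<in> orlicz_space M \<phi>" and e: "orlicz_norm M \<phi> f < e"
  shows "orlicz_modular M \<phi> f e \<le> 1"
proof -
  let ?S = "{\<epsilon>. 0 < \<epsilon> \<and> orlicz_modular M \<phi> f \<epsilon> \<le> 1}"
  have "?S \<noteq> {}" using orlicz_space_modular_le_1[OF \<phi> f] by blast
  then have "\<exists>e'\<in>?S. e' < e"
    using e by (subst cInf_less_iff[symmetric]) (auto simp: orlicz_norm_def intro: bdd_belowI[of _ 0])
  then obtain e' where e': "e' \<in> ?S" "e' < e" ..
  then have "orlicz_modular M \<phi> f e \<le> orlicz_modular M \<phi> f e'"
    by (intro orlicz_modular_antimono[OF \<phi>]) auto
  with e' show ?thesis by auto
qed

lemma orlicz_space_cmult: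
  assumes "orlicz_function \<phi>" "f \<in> orlicz_space M \<phi>"
  shows "(\<lambda>x. c * f x) \<in> orlicz_space M \<phi>"
proof (cases "c = 0")
  case True
  then show ?thesis
    using assms by (auto simp: orlicz_space_def orlicz_function_zero intro: exI[of _ 1])
next
  case False
  obtain l where "f \<in> borel_measurable M" "0 < l" "(\<integral>\<^sup>+ x. ennreal (\<phi> (l * \<bar>f x\<bar>)) \<partial>M) < \<infinity>"
    using assms(2) unfolding orlicz_space_def by auto
  moreover have "l / \<bar>c\<bar> * \<bar>c * f x\<bar> = l * \<bar>f x\<bar>" for x
    using False by (simp add: abs_mult)
  ultimately show ?thesis
    using False unfolding orlicz_space_def by (auto intro!: exI[of _ "l / \<bar>c\<bar>"])
qed

section \<open>p-normability implies type p\<close>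

lemma AE_abs_rademacher: "AE t in lborel. \<forall>k. \<bar>rademacher k t\<bar> = 1"
proof (rule AE_I')
  have dyadic: "{t. \<exists>k::nat. sin (2 ^ k * pi * t) = 0} \<subseteq> (\<lambda>(k::nat, i::int). real_of_int i / 2 ^ k) ` UNIV"
  proof
    fix t assume "t \<in> {t. \<exists>k::nat. sin (2 ^ k * pi * t) = 0}"
    then obtain k :: nat and i :: int where "2 ^ k * pi * t = real_of_int i * pi"
      by (auto simp: sin_zero_iff_int2)
    then have "t = real_of_int i / 2 ^ k" by (simp add: field_simps)
    then show "t \<in> (\<lambda>(k::nat, i::int). real_of_int i / 2 ^ k) ` UNIV" by force
  qed
  show "{t. \<exists>k::nat. sin (2 ^ k * pi * t) = 0} \<in> null_sets lborel"
    by (rule countable_imp_null_set_lborel[OF countable_subset[OF dyadic]]) simp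
qed (auto simp: rademacher_def abs_sgn_eq)

lemma p_normable_imp_has_type:
  assumes \<phi>: "orlicz_function \<phi>" and "p_normable (orlicz_space M \<phi>) (orlicz_norm M \<phi>) p"
  shows "has_type (orlicz_space M \<phi>) (orlicz_norm M \<phi>) p"
proof -
  let ?N = "orlicz_norm M \<phi>"
  obtain C where C: "0 < C" and normable: "\<And>n (x :: nat \<Rightarrow> 'a \<Rightarrow> real). \<forall>k\<in>{1..n}. x k \<in> orlicz_space M \<phi> \<Longrightarrow>
      ?N (\<lambda>\<omega>. \<Sum>k=1..n. x k \<omega>) \<le> C * (\<Sum>k=1..n. ?N (x k) powr p) powr (1 / p)"
    using assms(2) unfolding p_normable_def by blast
  have "(\<integral>\<^sup>+ t. ennreal (?N (\<lambda>\<omega>. \<Sum>k=1..n. rademacher k t * x k \<omega>)) * indicator {0..1} t \<partial>lborel)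
      \<le> ennreal (C * (\<Sum>k=1..n. ?N (x k) powr p) powr (1 / p))"
    if x: "\<forall>k\<in>{1..n}. x k \<in> orlicz_space M \<phi>" for n x
  proof -
    let ?bound = "C * (\<Sum>k=1..n. ?N (x k) powr p) powr (1 / p)"
    have pointwise: "?N (\<lambda>\<omega>. \<Sum>k=1..n. rademacher k t * x k \<omega>) \<le> ?bound"
      if t: "\<forall>k. \<bar>rademacher k t\<bar> = 1" for t
    proof -
      have "?N (\<lambda>\<omega>. rademacher k t * x k \<omega>) = ?N (x k)" for k
        using t by (intro orlicz_norm_cong_abs) (simp add: abs_mult)
      then show ?thesis
        using normable[of n "\<lambda>k \<omega>. rademacher k t * x k \<omega>"] x by (simp add: orlicz_space_cmult[OF \<phi>])
    qed
    have "AE t in lborel. ennreal (?N (\<lambda>\<omega>. \<Sum>k=1..n. rademacher k t * x k \<omega>)) * indicator {0..1} t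
        \<le> ennreal ?bound * indicator {0..1} t"
      using AE_abs_rademacher by eventually_elim (intro mult_right_mono ennreal_leI pointwise; simp)
    then have "(\<integral>\<^sup>+ t. ennreal (?N (\<lambda>\<omega>. \<Sum>k=1..n. rademacher k t * x k \<omega>)) * indicator {0..1} t \<partial>lborel)
        \<le> (\<integral>\<^sup>+ t. ennreal ?bound * indicator {0..1::real} t \<partial>lborel)"
      by (rule nn_integral_mono_AE)
    then show ?thesis by (simp add: nn_integral_cmult_indicator)
  qed
  with C show ?thesis unfolding has_type_def by blast
qed

section \<open>\<Delta>^(*p) implies p-normability\<close>

lemma powr_add_le_add_powr:
  fixes a b p :: real
  assumes "0 < p" "p \<le> 1" "0 \<le> a" "0 \<le> b"
  shows "(a + b) powr p \<le> a powr p + b powr p"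
proof (cases "a + b = 0")
  case False
  then have s: "0 < a + b" using assms by simp
  have le_powr: "t \<le> t powr p" if "0 \<le> t" "t \<le> 1" for t
    using powr_mono'[of p 1 t] assms that by simp
  have "a / (a + b) + b / (a + b) \<le> (a / (a + b)) powr p + (b / (a + b)) powr p"
    using assms s by (intro add_mono le_powr) auto
  then have "(a + b) powr p * 1 \<le> (a + b) powr p * ((a / (a + b)) powr p + (b / (a + b)) powr p)"
    using s by (intro mult_left_mono) (auto simp: add_divide_distrib[symmetric])
  also have "\<dots> = a powr p + b powr p"
    using assms s by (simp add: powr_divide distrib_left)
  finally show ?thesis by simp
qed (use assms in auto)

lemma powr_sum_le_sum_powr:
  fixes p :: real and a :: "'b \<Rightarrow> real"
  assumes "0 < p" "p \<le> 1" "\<And>k. k \<in> I \<Longrightarrow> 0 \<le> a k"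
  shows "(\<Sum>k\<in>I. a k) powr p \<le> (\<Sum>k\<in>I. a k powr p)"
  using assms(3)
proof (induction I rule: infinite_finite_induct)
  case (insert x F)
  have "(\<Sum>k\<in>insert x F. a k) powr p \<le> a x powr p + (\<Sum>k\<in>F. a k) powr p"
    using insert assms by (simp add: powr_add_le_add_powr sum_nonneg)
  also have "\<dots> \<le> (\<Sum>k\<in>insert x F. a k powr p)" using insert by simp
  finally show ?case .
qed simp_all

definition p_growth :: "(real \<Rightarrow> real) \<Rightarrow> real \<Rightarrow> real \<Rightarrow> real \<Rightarrow> real \<Rightarrow> bool" where
  "p_growth \<phi> K p v R \<longleftrightarrow>
     (\<forall>u w. 0 < u \<longrightarrow> v \<le> u \<longrightarrow> u \<le> w \<longrightarrow> w \<le> R \<longrightarrow> K * (w / u) powr p * \<phi> u \<le> \<phi> w)"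

lemma p_growthI:
  assumes "\<And>a u. 1 \<le> a \<Longrightarrow> 0 < u \<Longrightarrow> v \<le> u \<Longrightarrow> a * u \<le> R \<Longrightarrow> K * a powr p * \<phi> u \<le> \<phi> (a * u)"
  shows "p_growth \<phi> K p v R"
  unfolding p_growth_def
proof (intro allI impI)
  fix u w :: real assume "0 < u" "v \<le> u" "u \<le> w" "w \<le> R"
  then show "K * (w / u) powr p * \<phi> u \<le> \<phi> w"
    using assms[of "w / u" u] by simp
qed

lemma p_growth_mono:
  assumes "p_growth \<phi> K p v R" "orlicz_function \<phi>" "K' \<le> K" "v \<le> v'" "R' \<le> R"
  shows "p_growth \<phi> K' p v' R'"
  unfolding p_growth_def
proof (intro allI impI)
  fix u w :: real assume uw: "0 < u" "v' \<le> u" "u \<le> w" "w \<le> R'"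
  have "K' * (w / u) powr p * \<phi> u \<le> K * (w / u) powr p * \<phi> u"
    using assms(3) uw orlicz_function_nonneg[OF assms(2), of u] by (intro mult_right_mono) auto
  also have "\<dots> \<le> \<phi> w" using assms uw unfolding p_growth_def by auto
  finally show "K' * (w / u) powr p * \<phi> u \<le> \<phi> w" .
qed

lemma p_growth_extend_below:
  assumes \<phi>: "orlicz_function \<phi>" and p: "0 < p" and K: "0 \<le> K" "K \<le> 1"
    and G: "p_growth \<phi> K p v R" and v': "0 < v'" "v' \<le> v"
  shows "p_growth \<phi> (K * (v' / v) powr p) p v' R"
  unfolding p_growth_def
proof (intro allI impI)
  fix u w :: real assume uw: "0 < u" "v' \<le> u" "u \<le> w" "w \<le> R"
  have v: "0 < v" using v' by simp
  have lhs: "K * (v' / v) powr p * (w / u) powr p * \<phi> u = K * (v' * w / (v * u)) powr p * \<phi> u"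
    using v v' uw by (simp add: powr_mult[symmetric])
  have G': "K * (w' / u') powr p * \<phi> u' \<le> \<phi> w'" if "0 < u'" "v \<le> u'" "u' \<le> w'" "w' \<le> R" for u' w'
    using G that unfolding p_growth_def by blast
  consider "v \<le> u" | "u < v" "v \<le> w" | "w < v" by linarith
  then show "K * (v' / v) powr p * (w / u) powr p * \<phi> u \<le> \<phi> w"
  proof cases
    case 1
    have "v' * w / (v * u) \<le> w / u"
      using v v' uw by (simp add: field_simps mult_right_mono)
    then have "K * (v' * w / (v * u)) powr p * \<phi> u \<le> K * (w / u) powr p * \<phi> u"
      using K p v v' uw orlicz_function_nonneg[OF \<phi>, of u]
      by (intro mult_right_mono mult_left_mono powr_mono2) auto
    with G'[of u w] 1 uw show ?thesis unfolding lhs by linarith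
  next
    case 2
    have "v' * w / (v * u) \<le> w / v"
      using v v' uw by (simp add: field_simps mult_right_mono)
    then have "K * (v' * w / (v * u)) powr p * \<phi> u \<le> K * (w / v) powr p * \<phi> v"
      using K p v v' uw 2 orlicz_function_nonneg[OF \<phi>, of u] orlicz_function_mono[OF \<phi>, of u v]
      by (intro mult_mono mult_left_mono powr_mono2) auto
    with G'[of v w] v 2 uw show ?thesis unfolding lhs by linarith
  next
    case 3
    have "v' * w / (v * u) \<le> 1"
      using v v' uw 3 by (simp add: field_simps mult_mono)
    then have "K * (v' * w / (v * u)) powr p \<le> 1"
      using K v v' uw p by (intro mult_le_one powr_le1) auto
    then have "K * (v' * w / (v * u)) powr p * \<phi> u \<le> \<phi> u"
      using K orlicz_function_nonneg[OF \<phi>, of u] uw by (intro mult_left_le_one_le) auto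
    also have "\<dots> \<le> \<phi> w" using orlicz_function_mono[OF \<phi>, of u w] uw by simp
    finally show ?thesis unfolding lhs .
  qed
qed

lemma p_growth_extend_above:
  assumes \<phi>: "orlicz_function \<phi>" and p: "0 < p" and K: "0 \<le> K" "K \<le> 1"
    and G: "p_growth \<phi> K p v R" and R: "0 < R" "R \<le> R'"
  shows "p_growth \<phi> (K * (R / R') powr p) p v R'"
  unfolding p_growth_def
proof (intro allI impI)
  fix u w :: real assume uw: "0 < u" "v \<le> u" "u \<le> w" "w \<le> R'"
  have lhs: "K * (R / R') powr p * (w / u) powr p * \<phi> u = K * (R * w / (R' * u)) powr p * \<phi> u"
    using R uw by (simp add: powr_mult[symmetric])
  have G': "K * (w' / u') powr p * \<phi> u' \<le> \<phi> w'" if "0 < u'" "v \<le> u'" "u' \<le> w'" "w' \<le> R" for u' w'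
    using G that unfolding p_growth_def by blast
  consider "w \<le> R" | "u \<le> R" "R < w" | "R < u" by linarith
  then show "K * (R / R') powr p * (w / u) powr p * \<phi> u \<le> \<phi> w"
  proof cases
    case 1
    have "R * w / (R' * u) \<le> w / u"
      using R uw by (simp add: field_simps mult_right_mono)
    then have "K * (R * w / (R' * u)) powr p * \<phi> u \<le> K * (w / u) powr p * \<phi> u"
      using K p R uw orlicz_function_nonneg[OF \<phi>, of u]
      by (intro mult_right_mono mult_left_mono powr_mono2) auto
    with G'[of u w] 1 uw show ?thesis unfolding lhs by linarith
  next
    case 2
    have "R * w / (R' * u) \<le> R / u"
      using R uw by (simp add: field_simps mult_left_mono)
    then have "K * (R * w / (R' * u)) powr p * \<phi> u \<le> K * (R / u) powr p * \<phi> u"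
      using K p R uw orlicz_function_nonneg[OF \<phi>, of u]
      by (intro mult_right_mono mult_left_mono powr_mono2) auto
    also have "\<dots> \<le> \<phi> R" using G'[of u R] uw 2 by simp
    also have "\<phi> R \<le> \<phi> w" using orlicz_function_mono[OF \<phi>, of R w] R 2 by simp
    finally show ?thesis unfolding lhs .
  next
    case 3
    have "R * w \<le> u * R'" using R uw 3 by (intro mult_mono) auto
    then have "R * w / (R' * u) \<le> 1" using R uw by (simp add: field_simps)
    then have "K * (R * w / (R' * u)) powr p \<le> 1"
      using K R uw p by (intro mult_le_one powr_le1) auto
    then have "K * (R * w / (R' * u)) powr p * \<phi> u \<le> \<phi> u"
      using K orlicz_function_nonneg[OF \<phi>, of u] uw by (intro mult_left_le_one_le) auto
    also have "\<dots> \<le> \<phi> w" using orlicz_function_mono[OF \<phi>, of u w] uw by simp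
    finally show ?thesis unfolding lhs .
  qed
qed

lemma p_growth_average_lower:
  assumes \<phi>: "orlicz_function \<phi>" and G: "p_growth \<phi> K p v R" and K: "0 \<le> K" and p: "0 < p"
    and \<theta>: "\<And>k. k \<in> I \<Longrightarrow> 0 \<le> \<theta> k" "sum \<theta> I = 1"
    and z: "\<And>k. k \<in> I \<Longrightarrow> 0 \<le> z k" "\<And>k. k \<in> I \<Longrightarrow> z k \<le> R"
    and u: "0 < u" "v \<le> u" "2 * u powr p \<le> (\<Sum>k\<in>I. \<theta> k * z k powr p)"
  shows "K * \<phi> u \<le> (\<Sum>k\<in>I. \<theta> k * \<phi> (z k))"
proof -
  have I: "finite I" using \<theta>(2) sum.infinite by fastforce
  define B where "B = {k\<in>I. u \<le> z k}"
  have B: "B \<subseteq> I" "finite B" using I by (auto simp: B_def intro: finite_subset)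
  have "(\<Sum>k\<in>I - B. \<theta> k * z k powr p) \<le> (\<Sum>k\<in>I - B. \<theta> k * u powr p)"
    using \<theta> z p by (intro sum_mono mult_left_mono powr_mono2) (auto simp: B_def)
  also have "\<dots> = (\<Sum>k\<in>I - B. \<theta> k) * u powr p" by (simp add: sum_distrib_right)
  also have "\<dots> \<le> (\<Sum>k\<in>I. \<theta> k) * u powr p"
    using I \<theta>(1) by (intro mult_right_mono sum_mono2) auto
  finally have "(\<Sum>k\<in>I - B. \<theta> k * z k powr p) \<le> u powr p" using \<theta>(2) by simp
  moreover have "(\<Sum>k\<in>I. \<theta> k * z k powr p) = (\<Sum>k\<in>B. \<theta> k * z k powr p) + (\<Sum>k\<in>I - B. \<theta> k * z k powr p)"
    using sum.subset_diff[OF B(1) I] by (simp add: add.commute)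
  ultimately have mass: "u powr p \<le> (\<Sum>k\<in>B. \<theta> k * z k powr p)" using u(3) by linarith
  have "\<theta> k * (K * \<phi> u / u powr p) * z k powr p \<le> \<theta> k * \<phi> (z k)" if k: "k \<in> B" for k
  proof -
    have "K * (z k / u) powr p * \<phi> u \<le> \<phi> (z k)"
      using G u k z unfolding p_growth_def B_def by auto
    then have "K * \<phi> u / u powr p * z k powr p \<le> \<phi> (z k)"
      using k u z(1)[of k] by (simp add: B_def powr_divide mult_ac)
    then have "\<theta> k * (K * \<phi> u / u powr p * z k powr p) \<le> \<theta> k * \<phi> (z k)"
      using \<theta>(1)[of k] k by (intro mult_left_mono) (auto simp: B_def)
    then show ?thesis by (simp add: mult_ac)
  qed
  have "K * \<phi> u = (K * \<phi> u / u powr p) * u powr p" using u by simp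
  also have "\<dots> \<le> (K * \<phi> u / u powr p) * (\<Sum>k\<in>B. \<theta> k * z k powr p)"
    using mass K u orlicz_function_nonneg[OF \<phi>, of u] by (intro mult_left_mono) auto
  also have "\<dots> = (\<Sum>k\<in>B. \<theta> k * (K * \<phi> u / u powr p) * z k powr p)"
    by (simp add: sum_distrib_left mult_ac)
  also have "\<dots> \<le> (\<Sum>k\<in>B. \<theta> k * \<phi> (z k))" by (intro sum_mono) fact
  also have "\<dots> \<le> (\<Sum>k\<in>I. \<theta> k * \<phi> (z k))"
    using I B \<theta> z orlicz_function_nonneg[OF \<phi>] by (intro sum_mono2) auto
  finally show ?thesis .
qed

lemma p_growth_power_mean_le:
  assumes \<phi>: "orlicz_function \<phi>" and G: "p_growth \<phi> K p v R" and K: "0 < K" "K \<le> 1"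
    and p: "0 < p" and v: "0 \<le> v"
    and \<theta>: "\<And>k. k \<in> I \<Longrightarrow> 0 \<le> \<theta> k" "sum \<theta> I = 1"
    and z: "\<And>k. k \<in> I \<Longrightarrow> 0 \<le> z k" "\<And>k. k \<in> I \<Longrightarrow> z k \<le> R"
  shows "\<phi> ((K\<^sup>2 * (\<Sum>k\<in>I. \<theta> k * z k powr p) / 4) powr (1 / p))
    \<le> (\<Sum>k\<in>I. \<theta> k * \<phi> (z k)) / 2 + \<phi> v"
proof -
  define y where "y = (\<Sum>k\<in>I. \<theta> k * z k powr p)"
  define T where "T = (\<Sum>k\<in>I. \<theta> k * \<phi> (z k))"
  define w where "w = (K\<^sup>2 * y / 4) powr (1 / p)"
  define u where "u = (y / 2) powr (1 / p)"
  have y: "0 \<le> y" unfolding y_def using \<theta> z by (auto intro!: sum_nonneg)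
  have T: "0 \<le> T" unfolding T_def using \<theta> z orlicz_function_nonneg[OF \<phi>] by (auto intro!: sum_nonneg)
  have "\<phi> w \<le> T / 2 + \<phi> v"
  proof (cases "w \<le> v")
    case True
    then show ?thesis using T orlicz_function_mono[OF \<phi>, of w v] by (simp add: w_def)
  next
    case False
    then have w: "v \<le> w" "0 < w" using v by auto
    then have "0 < y" using y by (cases "y = 0") (auto simp: w_def)
    have wp: "w powr p = K\<^sup>2 * y / 4" and up: "u powr p = y / 2"
      using \<open>0 < y\<close> p by (simp_all add: w_def u_def powr_powr)
    have "K\<^sup>2 \<le> 1" using K by (simp add: power_le_one)
    then have "K\<^sup>2 * y / 4 \<le> y / 2" using \<open>0 < y\<close> by simp
    then have wu: "w \<le> u" unfolding w_def u_def using p y by (intro powr_mono2) auto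
    obtain k0 where "k0 \<in> I" using \<theta>(2) by fastforce
    then have "0 \<le> R" using z by (meson order_trans)
    have "y \<le> (\<Sum>k\<in>I. \<theta> k * R powr p)"
      unfolding y_def using \<theta> z p by (intro sum_mono mult_left_mono powr_mono2) auto
    also have "\<dots> = R powr p" using \<theta>(2) by (simp add: sum_distrib_right[symmetric])
    finally have "u \<le> (R powr p) powr (1 / p)"
      unfolding u_def using p y by (intro powr_mono2) auto
    then have uR: "u \<le> R" using \<open>0 \<le> R\<close> p by (simp add: powr_powr)
    have "K * (u / w) powr p * \<phi> w \<le> \<phi> u"
      using G w wu uR unfolding p_growth_def by auto
    moreover have "(u / w) powr p = 2 / K\<^sup>2"
      using w \<open>0 < y\<close> K by (simp add: powr_divide up wp power2_eq_square field_simps)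
    ultimately have "2 * \<phi> w \<le> K * \<phi> u" using K by (simp add: power2_eq_square field_simps)
    also have "K * \<phi> u \<le> T"
      unfolding T_def using \<open>0 < y\<close> w wu
      by (intro p_growth_average_lower[OF \<phi> G _ p \<theta> z]) (auto simp: up y_def K less_imp_le)
    finally show ?thesis using orlicz_function_nonneg[OF \<phi> v] by simp
  qed
  then show ?thesis by (simp add: w_def y_def T_def)
qed

lemma p_growth_normalized_sum_le:
  fixes a l :: "'b \<Rightarrow> real"
  assumes \<phi>: "orlicz_function \<phi>" and p: "0 < p" "p \<le> 1" and K: "0 < K" "K \<le> 1" and v: "0 \<le> v"
    and I: "finite I" "I \<noteq> {}" and l: "\<And>k. k \<in> I \<Longrightarrow> 0 < l k"
    and G: "\<And>k. k \<in> I \<Longrightarrow> p_growth \<phi> K p v (\<bar>a k\<bar> / l k)"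
  defines "L \<equiv> (\<Sum>k\<in>I. l k powr p)"
  shows "\<phi> (\<bar>\<Sum>k\<in>I. a k\<bar> / ((4 / K\<^sup>2) powr (1 / p) * L powr (1 / p)))
    \<le> (\<Sum>k\<in>I. l k powr p / L * \<phi> (\<bar>a k\<bar> / l k)) / 2 + \<phi> v"
proof -
  define \<theta> where "\<theta> k = l k powr p / L" for k
  define z where "z k = \<bar>a k\<bar> / l k" for k
  define y where "y = (\<Sum>k\<in>I. \<theta> k * z k powr p)"
  have "0 < L" unfolding L_def using I l by (intro sum_pos) (auto simp: less_imp_neq[symmetric])
  have \<theta>: "0 \<le> \<theta> k" "sum \<theta> I = 1" for k
    using \<open>0 < L\<close> by (auto simp: \<theta>_def L_def sum_divide_distrib[symmetric])
  have z: "0 \<le> z k" if "k \<in> I" for k using l[OF that] by (simp add: z_def)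
  have y: "0 \<le> y" unfolding y_def using \<theta> z by (auto intro!: sum_nonneg)
  have "(\<Sum>k\<in>I. \<bar>a k\<bar>) powr p \<le> (\<Sum>k\<in>I. \<bar>a k\<bar> powr p)"
    using p by (intro powr_sum_le_sum_powr) auto
  also have "\<dots> = L * y"
    unfolding y_def sum_distrib_left using \<open>0 < L\<close> l
    by (intro sum.cong) (auto simp: \<theta>_def z_def powr_divide less_imp_neq[symmetric])
  finally have sum_le: "(\<Sum>k\<in>I. \<bar>a k\<bar>) powr p \<le> L * y" .
  have "\<bar>\<Sum>k\<in>I. a k\<bar> \<le> ((\<Sum>k\<in>I. \<bar>a k\<bar>) powr p) powr (1 / p)"
    using p sum_abs[of a I] by (simp add: powr_powr sum_nonneg)
  also have "\<dots> \<le> (L * y) powr (1 / p)" using sum_le p by (intro powr_mono2) auto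
  finally have "\<bar>\<Sum>k\<in>I. a k\<bar> \<le> (L * y) powr (1 / p)" .
  then have "\<bar>\<Sum>k\<in>I. a k\<bar> / ((4 / K\<^sup>2) powr (1 / p) * L powr (1 / p)) \<le> (K\<^sup>2 * y / 4) powr (1 / p)"
    using \<open>0 < L\<close> K y by (simp add: powr_mult powr_divide divide_le_eq field_simps)
  then have "\<phi> (\<bar>\<Sum>k\<in>I. a k\<bar> / ((4 / K\<^sup>2) powr (1 / p) * L powr (1 / p)))
      \<le> \<phi> ((K\<^sup>2 * y / 4) powr (1 / p))"
    using \<open>0 < L\<close> K by (intro orlicz_function_mono[OF \<phi>]) auto
  also have "\<dots> \<le> (\<Sum>k\<in>I. \<theta> k * \<phi> (z k)) / 2 + \<phi> v"
  proof -
    have "Max (z ` I) \<in> z ` I" using I by (intro Max_in) auto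
    then obtain k0 where k0: "k0 \<in> I" "z k0 = Max (z ` I)" by (metis imageE)
    have "p_growth \<phi> K p v (z k0)" using G k0(1) by (simp add: z_def)
    then show ?thesis unfolding y_def
      using I k0 \<phi> K p v \<theta> z by (intro p_growth_power_mean_le[where R = "z k0"]) auto
  qed
  finally show ?thesis by (simp add: \<theta>_def z_def)
qed

text \<open>Growth is only required up to the values taken by the unit ball of the modular, which on
  sequence spaces is bounded.\<close>

definition p_growth_on_unit_ball :: "'a measure \<Rightarrow> (real \<Rightarrow> real) \<Rightarrow> real \<Rightarrow> real \<Rightarrow> real \<Rightarrow> bool"
  where "p_growth_on_unit_ball M \<phi> K p v \<longleftrightarrow> (\<forall>f e \<omega>. 0 < e \<longrightarrow> orlicz_modular M \<phi> f e \<le> 1 \<longrightarrow>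
    \<omega> \<in> space M \<longrightarrow> p_growth \<phi> K p v (\<bar>f \<omega>\<bar> / e))"

lemma orlicz_modular_sum_le_1:
  fixes x :: "'b \<Rightarrow> 'a \<Rightarrow> real"
  assumes \<phi>: "orlicz_function \<phi>" and p: "0 < p" "p \<le> 1" and K: "0 < K" "K \<le> 1" and v: "0 \<le> v"
    and growth: "p_growth_on_unit_ball M \<phi> K p v"
    and small: "ennreal (\<phi> v) * emeasure M (space M) \<le> ennreal (1 / 2)"
    and I: "finite I" "I \<noteq> {}" and x: "\<And>k. k \<in> I \<Longrightarrow> x k \<in> borel_measurable M"
    and l: "\<And>k. k \<in> I \<Longrightarrow> 0 < l k" "\<And>k. k \<in> I \<Longrightarrow> orlicz_modular M \<phi> (x k) (l k) \<le> 1"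
  shows "orlicz_modular M \<phi> (\<lambda>\<omega>. \<Sum>k\<in>I. x k \<omega>)
    ((4 / K\<^sup>2) powr (1 / p) * (\<Sum>k\<in>I. l k powr p) powr (1 / p)) \<le> 1"
proof -
  define L where "L = (\<Sum>k\<in>I. l k powr p)"
  define \<theta> where "\<theta> k = l k powr p / L" for k
  have "0 < L" unfolding L_def using I l by (intro sum_pos) (auto simp: less_imp_neq[symmetric])
  have \<theta>: "0 \<le> \<theta> k" "sum \<theta> I = 1" for k
    using \<open>0 < L\<close> by (auto simp: \<theta>_def L_def sum_divide_distrib[symmetric])
  have \<phi>x: "0 \<le> \<phi> (\<bar>x k \<omega>\<bar> / l k)" if "k \<in> I" for k \<omega>
    using l(1)[OF that] by (intro orlicz_function_nonneg[OF \<phi>]) simp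
  have "ennreal (\<phi> (\<bar>\<Sum>k\<in>I. x k \<omega>\<bar> / ((4 / K\<^sup>2) powr (1 / p) * L powr (1 / p))))
      \<le> (\<Sum>k\<in>I. ennreal (\<theta> k / 2) * ennreal (\<phi> (\<bar>x k \<omega>\<bar> / l k))) + ennreal (\<phi> v)"
    if \<omega>: "\<omega> \<in> space M" for \<omega>
  proof -
    have "\<phi> (\<bar>\<Sum>k\<in>I. x k \<omega>\<bar> / ((4 / K\<^sup>2) powr (1 / p) * L powr (1 / p)))
        \<le> (\<Sum>k\<in>I. \<theta> k * \<phi> (\<bar>x k \<omega>\<bar> / l k)) / 2 + \<phi> v"
      unfolding \<theta>_def L_def
      using growth l \<omega> unfolding p_growth_on_unit_ball_def
      by (intro p_growth_normalized_sum_le[OF \<phi> p K v I]) auto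
    also have "\<dots> = (\<Sum>k\<in>I. \<theta> k / 2 * \<phi> (\<bar>x k \<omega>\<bar> / l k)) + \<phi> v"
      by (simp add: sum_divide_distrib)
    finally have "ennreal (\<phi> (\<bar>\<Sum>k\<in>I. x k \<omega>\<bar> / ((4 / K\<^sup>2) powr (1 / p) * L powr (1 / p))))
        \<le> ennreal (\<Sum>k\<in>I. \<theta> k / 2 * \<phi> (\<bar>x k \<omega>\<bar> / l k)) + ennreal (\<phi> v)"
      using \<theta> \<phi>x orlicz_function_nonneg[OF \<phi> v]
      by (subst ennreal_plus[symmetric]) (auto intro!: ennreal_leI sum_nonneg)
    also have "ennreal (\<Sum>k\<in>I. \<theta> k / 2 * \<phi> (\<bar>x k \<omega>\<bar> / l k))
        = (\<Sum>k\<in>I. ennreal (\<theta> k / 2) * ennreal (\<phi> (\<bar>x k \<omega>\<bar> / l k)))"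
      using \<theta> \<phi>x by (simp add: ennreal_mult[symmetric])
    finally show ?thesis .
  qed
  then have "orlicz_modular M \<phi> (\<lambda>\<omega>. \<Sum>k\<in>I. x k \<omega>) ((4 / K\<^sup>2) powr (1 / p) * L powr (1 / p))
      \<le> (\<integral>\<^sup>+ \<omega>. (\<Sum>k\<in>I. ennreal (\<theta> k / 2) * ennreal (\<phi> (\<bar>x k \<omega>\<bar> / l k))) + ennreal (\<phi> v) \<partial>M)"
    by (intro nn_integral_mono)
  also have "\<dots> = (\<Sum>k\<in>I. ennreal (\<theta> k / 2) * orlicz_modular M \<phi> (x k) (l k))
      + ennreal (\<phi> v) * emeasure M (space M)"
  proof -
    have "(\<lambda>\<omega>. ennreal (\<phi> (\<bar>x k \<omega>\<bar> / l k))) \<in> borel_measurable M" if "k \<in> I" for k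
      using x[OF that] l(1)[OF that]
      by (intro measurable_compose[OF _ measurable_ennreal] borel_measurable_orlicz_comp[OF \<phi>]) auto
    then show ?thesis by (simp add: nn_integral_add nn_integral_sum nn_integral_cmult)
  qed
  also have "\<dots> \<le> (\<Sum>k\<in>I. ennreal (\<theta> k / 2) * 1) + ennreal (1 / 2)"
    using l(2) small by (intro add_mono sum_mono mult_left_mono) auto
  also have "\<dots> = ennreal (1 / 2) + ennreal (1 / 2)"
    using \<theta> by (simp add: sum_divide_distrib[symmetric])
  also have "\<dots> = 1" by (subst ennreal_plus[symmetric]) auto
  finally show ?thesis by (simp add: L_def)
qed

lemma orlicz_norm_zero: "orlicz_function \<phi> \<Longrightarrow> orlicz_norm M \<phi> (\<lambda>x. 0) = 0"
proof -
  assume "orlicz_function \<phi>"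
  then have "{\<epsilon>. 0 < \<epsilon> \<and> orlicz_modular M \<phi> (\<lambda>x. 0) \<epsilon> \<le> 1} = {0<..}"
    by (auto simp: orlicz_function_zero)
  then show ?thesis by (simp add: orlicz_norm_def)
qed

lemma orlicz_norm_sum_le:
  fixes x :: "'b \<Rightarrow> 'a \<Rightarrow> real"
  assumes \<phi>: "orlicz_function \<phi>" and p: "0 < p" "p \<le> 1" and K: "0 < K" "K \<le> 1" and v: "0 \<le> v"
    and growth: "p_growth_on_unit_ball M \<phi> K p v"
    and small: "ennreal (\<phi> v) * emeasure M (space M) \<le> ennreal (1 / 2)"
    and I: "finite I" and x: "\<And>k. k \<in> I \<Longrightarrow> x k \<in> orlicz_space M \<phi>"
  shows "orlicz_norm M \<phi> (\<lambda>\<omega>. \<Sum>k\<in>I. x k \<omega>)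
    \<le> (4 / K\<^sup>2) powr (1 / p) * (\<Sum>k\<in>I. orlicz_norm M \<phi> (x k) powr p) powr (1 / p)"
proof (cases "I = {}")
  case True
  then show ?thesis using p by (simp add: orlicz_norm_zero[OF \<phi>])
next
  case False
  define N where "N k = orlicz_norm M \<phi> (x k)" for k
  define g where "g d = (4 / K\<^sup>2) powr (1 / p) * (\<Sum>k\<in>I. (N k + d) powr p) powr (1 / p)" for d
  have N: "0 \<le> N k" if "k \<in> I" for k unfolding N_def using x[OF that] by (rule orlicz_norm_nonneg[OF \<phi>])
  have "orlicz_norm M \<phi> (\<lambda>\<omega>. \<Sum>k\<in>I. x k \<omega>) \<le> g d" if "0 < d" for d
  proof (rule orlicz_norm_le)
    have "0 < (\<Sum>k\<in>I. (N k + d) powr p)"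
      using I False N \<open>0 < d\<close> by (intro sum_pos) (auto simp: add_nonneg_pos less_imp_neq[symmetric])
    then show "0 < g d" using K by (simp add: g_def)
    show "orlicz_modular M \<phi> (\<lambda>\<omega>. \<Sum>k\<in>I. x k \<omega>) (g d) \<le> 1"
      unfolding g_def using \<open>0 < d\<close> N x False
      by (intro orlicz_modular_sum_le_1[OF \<phi> p K v growth small I])
        (auto simp: N_def orlicz_space_def intro!: orlicz_modular_le_1[OF \<phi>] add_nonneg_pos)
  qed
  moreover have "(g \<longlongrightarrow> g 0) (at_right 0)"
    unfolding g_def using N p
    by (intro tendsto_intros tendsto_powr' sum_nonneg always_eventually allI)
      (auto simp: eventually_at_right_less intro!: sum_nonneg eventually_mono[OF eventually_at_right_less])
  ultimately have "orlicz_norm M \<phi> (\<lambda>\<omega>. \<Sum>k\<in>I. x k \<omega>) \<le> g 0"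
    by (intro tendsto_lowerbound[where F = "at_right 0"])
      (auto intro: eventually_mono[OF eventually_at_right_less])
  then show ?thesis by (simp add: g_def N_def)
qed

lemma p_normable_if_p_growth:
  assumes \<phi>: "orlicz_function \<phi>" and p: "0 < p" "p \<le> 1" and K: "0 < K" "K \<le> 1" and v: "0 \<le> v"
    and growth: "p_growth_on_unit_ball M \<phi> K p v"
    and small: "ennreal (\<phi> v) * emeasure M (space M) \<le> ennreal (1 / 2)"
  shows "p_normable (orlicz_space M \<phi>) (orlicz_norm M \<phi>) p"
  unfolding p_normable_def using K
  by (intro exI[of _ "(4 / K\<^sup>2) powr (1 / p)"] conjI allI impI orlicz_norm_sum_le[OF \<phi> p K v growth small])
    auto

lemma le_nn_integral_count_space: "f x \<le> (\<integral>\<^sup>+ y. f y \<partial>count_space UNIV)"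
proof -
  have "f x = (\<integral>\<^sup>+ y. f x * indicator {x} y \<partial>count_space UNIV)"
    by (simp add: nn_integral_cmult_indicator)
  also have "\<dots> \<le> (\<integral>\<^sup>+ y. f y \<partial>count_space UNIV)"
    by (intro nn_integral_mono) (simp split: split_indicator)
  finally show ?thesis .
qed

lemma p_growth_on_unit_ball_count_space:
  assumes \<phi>: "orlicz_function \<phi>" and G: "p_growth \<phi> K p v R" and R: "0 \<le> R" "1 < \<phi> R"
  shows "p_growth_on_unit_ball (count_space UNIV) \<phi> K p v"
  unfolding p_growth_on_unit_ball_def
proof (intro allI impI)
  fix f :: "'a \<Rightarrow> real" and e \<omega>
  assume e: "0 < e" and ball: "orlicz_modular (count_space UNIV) \<phi> f e \<le> 1"
  have "ennreal (\<phi> (\<bar>f \<omega>\<bar> / e)) \<le> 1"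
    using le_nn_integral_count_space ball by (rule order_trans)
  then have "\<bar>f \<omega>\<bar> / e \<le> R"
    using R e orlicz_function_le_iff[OF \<phi>, of "\<bar>f \<omega>\<bar> / e" R] by (simp add: ennreal_le_1)
  then show "p_growth \<phi> K p v (\<bar>f \<omega>\<bar> / e)" by (rule p_growth_mono[OF G \<phi> order_refl order_refl])
qed

lemma p_growth_of_growth_cond_CaseB:
  assumes \<phi>: "orlicz_function \<phi>" and p: "0 < p" and "0 < K0" "growth_cond CaseB \<phi> K0 p" and "0 < d"
  obtains K v where "0 < K" "K \<le> 1" "0 \<le> v" "v \<le> d" "\<And>R. p_growth \<phi> K p v R"
proof -
  define K where "K = min K0 1"
  obtain v0 where "0 \<le> v0" and gr: "\<And>a u. 1 \<le> a \<Longrightarrow> v0 \<le> u \<Longrightarrow> K0 * a powr p * \<phi> u \<le> \<phi> (a * u)"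
    using assms(4) by (auto simp: growth_cond_def)
  then have G0: "p_growth \<phi> K p v0 R" for R
    by (intro p_growth_mono[OF p_growthI[where K = K0 and v = v0] \<phi>]) (auto simp: K_def)
  show thesis
  proof (cases "d \<le> v0")
    case True
    have "(d / v0) powr p \<le> 1" using \<open>0 < d\<close> True p by (intro powr_le1) auto
    then show ?thesis
      using \<open>0 < K0\<close> \<open>0 < d\<close> True mult_le_one[of K "(d / v0) powr p"]
      by (intro that[of "K * (d / v0) powr p" d] p_growth_extend_below[OF \<phi> p _ _ G0]) (auto simp: K_def)
  next
    case False
    then show ?thesis using \<open>0 < K0\<close> G0 \<open>0 \<le> v0\<close> by (intro that[of K v0]) (auto simp: K_def)
  qed
qed

lemma p_growth_of_growth_cond_CaseC:
  assumes \<phi>: "orlicz_function \<phi>" and p: "0 < p" and "0 < K0" "growth_cond CaseC \<phi> K0 p"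
  obtains K R where "0 < K" "K \<le> 1" "0 < R" "1 < \<phi> R" "p_growth \<phi> K p 0 R"
proof -
  define K where "K = min K0 1"
  obtain v0 where "0 < v0"
    and gr: "\<And>a u. 1 \<le> a \<Longrightarrow> 0 < u \<Longrightarrow> a * u \<le> v0 \<Longrightarrow> K0 * a powr p * \<phi> u \<le> \<phi> (a * u)"
    using assms(4) by (auto simp: growth_cond_def)
  then have G0: "p_growth \<phi> K p 0 v0"
    by (intro p_growth_mono[OF p_growthI[where K = K0 and v = 0] \<phi>]) (auto simp: K_def)
  obtain R0 where "0 < R0" "1 < \<phi> R0" using orlicz_function_large[OF \<phi>] .
  define R where "R = max R0 v0"
  have "1 < \<phi> R"
    using \<open>1 < \<phi> R0\<close> orlicz_function_mono[OF \<phi>, of R0 R] \<open>0 < R0\<close> by (auto simp: R_def)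
  have "(v0 / R) powr p \<le> 1" using \<open>0 < v0\<close> p by (intro powr_le1) (auto simp: R_def)
  then show thesis
    using \<open>0 < K0\<close> \<open>0 < v0\<close> \<open>0 < R0\<close> \<open>1 < \<phi> R\<close> mult_le_one[of K "(v0 / R) powr p"]
    by (intro that[of "K * (v0 / R) powr p" R] p_growth_extend_above[OF \<phi> p _ _ G0])
      (auto simp: K_def R_def)
qed

lemma delta_star_imp_p_normable:
  assumes ms: "measure_setting c M" and p: "0 < p" "p \<le> 1" and \<phi>: "orlicz_function \<phi>"
    and "delta_star c p \<phi>"
  shows "p_normable (orlicz_space M \<phi>) (orlicz_norm M \<phi>) p"
proof -
  obtain K0 where "0 < K0" and gc: "growth_cond c \<phi> K0 p"
    using assms(5) unfolding delta_star_def by auto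
  show ?thesis
  proof (cases c)
    case CaseA
    have "p_growth \<phi> K0 p 0 R" for R
      using gc by (intro p_growthI) (simp add: CaseA growth_cond_def)
    then have "p_growth_on_unit_ball M \<phi> (min K0 1) p 0"
      unfolding p_growth_on_unit_ball_def
      by (blast intro: p_growth_mono[OF _ \<phi> min.cobounded1 order_refl order_refl])
    then show ?thesis
      using \<open>0 < K0\<close> by (intro p_normable_if_p_growth[OF \<phi> p]) (auto simp: orlicz_function_zero[OF \<phi>])
  next
    case CaseB
    obtain T where T: "0 < T" "emeasure M (space M) = ennreal T"
      using ms by (cases "emeasure M (space M)") (auto simp: CaseB measure_setting_def)
    obtain d where "0 < d" and d: "\<And>x. 0 \<le> x \<Longrightarrow> x \<le> d \<Longrightarrow> \<phi> x < 1 / (2 * T)"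
      using orlicz_function_small[OF \<phi>, of "1 / (2 * T)"] T by auto
    obtain K v where K: "0 < K" "K \<le> 1" and v: "0 \<le> v" "v \<le> d" and G: "\<And>R. p_growth \<phi> K p v R"
      using p_growth_of_growth_cond_CaseB[OF \<phi> p(1) \<open>0 < K0\<close> gc[unfolded CaseB] \<open>0 < d\<close>] by blast
    have "\<phi> v * T \<le> 1 / 2"
      using d[of v] v T orlicz_function_mono[OF \<phi> v(1), of d] by (simp add: field_simps)
    then have "ennreal (\<phi> v * T) \<le> ennreal (1 / 2)" by (rule ennreal_leI)
    then have "ennreal (\<phi> v) * emeasure M (space M) \<le> ennreal (1 / 2)"
      using T orlicz_function_nonneg[OF \<phi> v(1)] by (simp add: ennreal_mult)
    moreover have "p_growth_on_unit_ball M \<phi> K p v"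
      using G by (simp add: p_growth_on_unit_ball_def)
    ultimately show ?thesis by (intro p_normable_if_p_growth[OF \<phi> p K v(1)])
  next
    case CaseC
    have M: "M = count_space UNIV" using ms by (simp add: CaseC measure_setting_def)
    obtain K R where K: "0 < K" "K \<le> 1" and R: "0 < R" "1 < \<phi> R" and G: "p_growth \<phi> K p 0 R"
      using p_growth_of_growth_cond_CaseC[OF \<phi> p(1) \<open>0 < K0\<close> gc[unfolded CaseC]] by blast
    have "p_growth_on_unit_ball M \<phi> K p 0"
      unfolding M using R by (intro p_growth_on_unit_ball_count_space[OF \<phi> G]) auto
    then show ?thesis
      by (rule p_normable_if_p_growth[OF \<phi> p K order_refl]) (simp add: orlicz_function_zero[OF \<phi>])
  qed
qed

section \<open>Disjoint sets of prescribed measure\<close>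

lemma nonatomic_subset_half:
  assumes "nonatomic M" "D \<in> fmeasurable M" "0 < measure M D"
  obtains D' where "D' \<in> fmeasurable M" "D' \<subseteq> D" "0 < measure M D'" "measure M D' \<le> measure M D / 2"
proof -
  have "0 < emeasure M D" using assms(2,3) by (simp add: emeasure_eq_measure2)
  then obtain B where B: "B \<in> sets M" "B \<subseteq> D" "0 < emeasure M B" "emeasure M B < emeasure M D"
    using assms(1,2) unfolding nonatomic_def fmeasurable_def by blast
  then have "B \<in> fmeasurable M" using assms(2) by (auto simp: fmeasurable_def)
  then have Bm: "0 < measure M B" "measure M B < measure M D"
    using B assms(2) by (auto simp: emeasure_eq_measure2 ennreal_less_iff)
  have "measure M (D - B) = measure M D - measure M B"
    using assms(2) B by (intro measure_Diff) (auto simp: fmeasurable_def)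
  then show thesis
    using that[of B] that[of "D - B"] \<open>B \<in> fmeasurable M\<close> assms(2) B Bm
    by (cases "measure M B \<le> measure M D / 2") auto
qed

lemma nonatomic_small_subset:
  assumes na: "nonatomic M" and E: "E \<in> sets M" "0 < emeasure M E" and "0 < \<delta>"
  obtains D where "D \<in> fmeasurable M" "D \<subseteq> E" "0 < measure M D" "measure M D \<le> \<delta>"
proof -
  obtain E0 where E0: "E0 \<in> fmeasurable M" "E0 \<subseteq> E" "0 < measure M E0"
  proof (cases "emeasure M E < \<infinity>")
    case True
    then have "E \<in> fmeasurable M" using E by (auto simp: fmeasurable_def)
    then show ?thesis using that[of E] E by (simp add: emeasure_eq_measure2)
  next
    case False
    then obtain B where B: "B \<in> sets M" "B \<subseteq> E" "0 < emeasure M B" "emeasure M B < emeasure M E"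
      using na E unfolding nonatomic_def by blast
    then have "B \<in> fmeasurable M"
      using order.strict_trans2[OF B(4) top_greatest] by (auto simp: fmeasurable_def)
    then show ?thesis using that[of B] B by (simp add: emeasure_eq_measure2)
  qed
  have halving: "\<exists>D\<in>fmeasurable M. D \<subseteq> E0 \<and> 0 < measure M D \<and> measure M D \<le> measure M E0 / 2 ^ j"
    for j
  proof (induction j)
    case (Suc j)
    then obtain D where "D \<in> fmeasurable M" "D \<subseteq> E0" "0 < measure M D"
      "measure M D \<le> measure M E0 / 2 ^ j" by auto
    moreover obtain D' where "D' \<in> fmeasurable M" "D' \<subseteq> D" "0 < measure M D'"
      "measure M D' \<le> measure M D / 2"
      using nonatomic_subset_half[OF na \<open>D \<in> fmeasurable M\<close> \<open>0 < measure M D\<close>] .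
    ultimately show ?case by (intro bexI[of _ D']) auto
  qed (use E0 in auto)
  obtain j :: nat where "measure M E0 / \<delta> < 2 ^ j"
    using real_arch_pow[of 2 "measure M E0 / \<delta>"] by auto
  then have "measure M E0 / 2 ^ j \<le> \<delta>" using \<open>0 < \<delta>\<close> by (simp add: field_simps)
  moreover obtain D where "D \<in> fmeasurable M" "D \<subseteq> E0" "0 < measure M D" "measure M D \<le> measure M E0 / 2 ^ j"
    using halving[of j] by blast
  ultimately show thesis using E0(2) that[of D] by auto
qed

lemma exists_ge_half_Sup:
  fixes S :: "real set"
  assumes "S \<noteq> {}" "bdd_above S" "\<And>s. s \<in> S \<Longrightarrow> 0 \<le> s"
  shows "\<exists>s\<in>S. \<forall>s'\<in>S. s' \<le> 2 * s"
proof (cases "Sup S \<le> 0")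
  case True
  obtain s where "s \<in> S" using assms(1) by blast
  moreover have "s' \<le> 2 * s" if "s' \<in> S" for s'
    using cSup_upper[OF that assms(2)] True assms(3)[OF \<open>s \<in> S\<close>] by linarith
  ultimately show ?thesis by blast
next
  case False
  then have "Sup S / 2 < Sup S" by simp
  then obtain s where "s \<in> S" "Sup S / 2 < s" using less_cSup_iff[OF assms(1,2)] by auto
  show ?thesis
  proof (intro bexI[of _ s] ballI)
    fix s' assume "s' \<in> S"
    then have "s' \<le> Sup S" using assms(2) by (rule cSup_upper)
    then show "s' \<le> 2 * s" using \<open>Sup S / 2 < s\<close> by linarith
  qed fact
qed

lemma greedy_exhaustion_sequence:
  assumes "0 \<le> t"
  obtains B :: "nat \<Rightarrow> 'a set" where "incseq B" "\<And>j. B j \<in> fmeasurable M" "\<And>j. B j \<subseteq> A"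
    "\<And>j. measure M (B j) \<le> t"
    "\<And>j D. D \<in> fmeasurable M \<Longrightarrow> D \<subseteq> A - B j \<Longrightarrow> measure M (B j) + measure M D \<le> t \<Longrightarrow>
      measure M (B j) + measure M D / 2 \<le> measure M (B (Suc j))"
proof -
  define adm where "adm B C \<longleftrightarrow> C \<in> fmeasurable M \<and> C \<subseteq> A - B \<and> measure M B + measure M C \<le> t"
    for B C
  define cho where "cho B = (SOME C. adm B C \<and> (\<forall>D. adm B D \<longrightarrow> measure M D \<le> 2 * measure M C))" for B
  define Bs where "Bs j = ((\<lambda>B. B \<union> cho B) ^^ j) {}" for j
  define ok where "ok B \<longleftrightarrow> B \<in> fmeasurable M \<and> B \<subseteq> A \<and> measure M B \<le> t" for B
  have cho: "adm B (cho B) \<and> (\<forall>D. adm B D \<longrightarrow> measure M D \<le> 2 * measure M (cho B))" if "ok B" for B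
  proof -
    have "\<exists>s\<in>measure M ` {C. adm B C}. \<forall>s'\<in>measure M ` {C. adm B C}. s' \<le> 2 * s"
    proof (rule exists_ge_half_Sup)
      have "adm B {}" using that by (simp add: adm_def ok_def)
      then show "measure M ` {C. adm B C} \<noteq> {}" by blast
      have "measure M C \<le> t" if "adm B C" for C
        using that measure_nonneg[of M B] unfolding adm_def by (elim conjE) linarith
      then show "bdd_above (measure M ` {C. adm B C})" by (auto intro: bdd_aboveI[of _ t])
    qed auto
    then show ?thesis unfolding cho_def by (rule someI_ex[OF bexE]) blast
  qed
  have Bs_Suc: "Bs (Suc j) = Bs j \<union> cho (Bs j)" for j by (simp add: Bs_def)
  have step: "ok (Bs j) \<and> measure M (Bs (Suc j)) = measure M (Bs j) + measure M (cho (Bs j))" for j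
  proof (induction j)
    case 0
    then show ?case using cho[of "{}"] assms by (auto simp: Bs_def ok_def adm_def)
  next
    case (Suc j)
    have ok: "ok (Bs (Suc j))" using Suc cho[of "Bs j"] by (auto simp: Bs_Suc ok_def adm_def)
    then have "measure M (Bs (Suc j) \<union> cho (Bs (Suc j))) = measure M (Bs (Suc j)) + measure M (cho (Bs (Suc j)))"
      using cho[OF ok] by (intro measure_Union) (auto simp: ok_def adm_def fmeasurable_def)
    then show ?case using ok by (simp add: Bs_Suc[of "Suc j"])
  qed
  show thesis
  proof (rule that[of Bs])
    show "incseq Bs" by (intro incseq_SucI) (auto simp: Bs_Suc)
    show "measure M (Bs j) + measure M D / 2 \<le> measure M (Bs (Suc j))"
      if "D \<in> fmeasurable M" "D \<subseteq> A - Bs j" "measure M (Bs j) + measure M D \<le> t" for j D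
    proof -
      have "adm (Bs j) D" using that by (simp add: adm_def)
      then have "measure M D \<le> 2 * measure M (cho (Bs j))" using cho step[of j] by blast
      then show ?thesis using step[of j] by linarith
    qed
  qed (use step in \<open>auto simp: ok_def\<close>)
qed

lemma nonatomic_subset_between:
  assumes na: "nonatomic M" and A: "A \<in> sets M" and t: "0 < t" "ennreal t \<le> emeasure M A"
  obtains B where "B \<in> fmeasurable M" "B \<subseteq> A" "t / 2 \<le> measure M B" "measure M B \<le> t"
\<comment> \<open>If the greedy sequence stayed below t/2, it would leave room in A for a set D of positive
  measure, at least half of which every step would have to add.\<close>
proof (rule ccontr)
  assume no_piece: "\<not> thesis"
  obtain Bs where inc: "incseq Bs" and Bs: "\<And>j. Bs j \<in> fmeasurable M" "\<And>j. Bs j \<subseteq> A"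
    "\<And>j. measure M (Bs j) \<le> t"
    and greedy: "\<And>j D. D \<in> fmeasurable M \<Longrightarrow> D \<subseteq> A - Bs j \<Longrightarrow> measure M (Bs j) + measure M D \<le> t \<Longrightarrow>
      measure M (Bs j) + measure M D / 2 \<le> measure M (Bs (Suc j))"
    using greedy_exhaustion_sequence[of t M A] t by (metis less_imp_le)
  have small: "measure M (Bs j) < t / 2" for j
    using that[OF Bs(1)[of j] Bs(2)[of j] _ Bs(3)[of j]] no_piece by (meson not_less)
  define U where "U = (\<Union>j. Bs j)"
  have U: "U \<in> sets M" "U \<subseteq> A" using Bs by (auto simp: U_def)
  have "emeasure M U = (SUP j. emeasure M (Bs j))" unfolding U_def
    using Bs inc by (intro SUP_emeasure_incseq[symmetric]) auto
  also have "\<dots> \<le> ennreal (t / 2)"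
    using Bs small by (intro SUP_least) (auto simp: emeasure_eq_measure2 ennreal_leI less_imp_le)
  finally have U_small: "emeasure M U \<le> ennreal (t / 2)" .
  have "0 < emeasure M (A - U)"
  proof (rule ccontr)
    assume "\<not> 0 < emeasure M (A - U)"
    have "ennreal t \<le> emeasure M ((A - U) \<union> U)" using t(2) U by (simp add: Un_absorb2)
    also have "\<dots> \<le> emeasure M (A - U) + emeasure M U" using A U by (intro emeasure_subadditive) auto
    also have "\<dots> \<le> ennreal (t / 2)" using \<open>\<not> 0 < emeasure M (A - U)\<close> U_small by simp
    finally show False using t by (simp add: ennreal_le_iff)
  qed
  then obtain D where D: "D \<in> fmeasurable M" "D \<subseteq> A - U" "0 < measure M D" "measure M D \<le> t / 2"
    using nonatomic_small_subset[OF na _ _ half_gt_zero[OF t(1)]] A U by blast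
  have linear_growth: "real j * (measure M D / 2) \<le> measure M (Bs j)" for j
  proof (induction j)
    case (Suc j)
    have "D \<subseteq> A - Bs j" using D(2) by (auto simp: U_def)
    then have "measure M (Bs j) + measure M D / 2 \<le> measure M (Bs (Suc j))"
      using greedy[OF D(1)] D(4) small[of j] by simp
    then show ?case using Suc by (simp add: distrib_right)
  qed simp
  obtain j :: nat where "t / (measure M D / 2) < real j" using reals_Archimedean2 by blast
  then show False using linear_growth[of j] small[of j] D(3) t by (simp add: field_simps)
qed

definition disjoint_pieces :: "'a measure \<Rightarrow> nat \<Rightarrow> real \<Rightarrow> bool" where
  "disjoint_pieces M n m \<longleftrightarrow> (\<exists>F. disjoint_family_on F {1..n} \<and>
     (\<forall>k\<in>{1..n}. F k \<in> fmeasurable M \<and> m / 2 \<le> measure M (F k) \<and> measure M (F k) \<le> m))"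

lemma nonatomic_disjoint_pieces_in:
  assumes na: "nonatomic M" and m: "0 < m"
  shows "A \<in> sets M \<Longrightarrow> ennreal (real n * m) \<le> emeasure M A \<Longrightarrow> \<exists>F. disjoint_family_on F {1..n} \<and>
    (\<forall>k\<in>{1..n}. F k \<in> fmeasurable M \<and> F k \<subseteq> A \<and> m / 2 \<le> measure M (F k) \<and> measure M (F k) \<le> m)"
proof (induction n arbitrary: A)
  case (Suc n)
  have "ennreal m \<le> ennreal (real (Suc n) * m)" using m by (intro ennreal_leI) simp
  then have "ennreal m \<le> emeasure M A" using Suc.prems(2) by (rule order_trans)
  then obtain B where B: "B \<in> fmeasurable M" "B \<subseteq> A" "m / 2 \<le> measure M B" "measure M B \<le> m"
    using nonatomic_subset_between[OF na Suc.prems(1) m] by blast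
  have "ennreal (real n * m) + emeasure M B \<le> ennreal (real n * m) + ennreal m"
    using B by (intro add_left_mono) (simp add: emeasure_eq_measure2)
  also have "\<dots> \<le> emeasure M A"
    using Suc.prems(2) m by (simp add: ennreal_plus[symmetric] distrib_right add.commute del: ennreal_plus)
  finally have "ennreal (real n * m) \<le> emeasure M (A - B)"
    using B Suc.prems(1) by (subst emeasure_Diff) (auto simp: fmeasurable_def ennreal_le_minus_iff)
  then obtain F where F: "disjoint_family_on F {1..n}"
    "\<forall>k\<in>{1..n}. F k \<in> fmeasurable M \<and> F k \<subseteq> A - B \<and> m / 2 \<le> measure M (F k) \<and> measure M (F k) \<le> m"
    using Suc.IH[of "A - B"] Suc.prems(1) B(1) by blast
  have "insert (Suc n) {1..n} = {1..Suc n}" by auto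
  moreover have "disjoint_family_on (F(Suc n := B)) (insert (Suc n) {1..n})"
    using F by (auto simp: disjoint_family_on_insert disjoint_family_on_def)
  ultimately have "disjoint_family_on (F(Suc n := B)) {1..Suc n}" by simp
  with F B show ?case by (intro exI[of _ "F(Suc n := B)"] conjI) (auto simp: fun_upd_def)
qed (simp add: disjoint_family_on_def)

lemma nonatomic_disjoint_pieces:
  assumes "nonatomic M" "0 < m" "ennreal (real n * m) \<le> emeasure M (space M)"
  shows "disjoint_pieces M n m"
  using nonatomic_disjoint_pieces_in[OF assms(1,2) sets.top assms(3)] unfolding disjoint_pieces_def by blast

lemma nat_floor_bounds:
  fixes x :: real
  assumes "1 \<le> x"
  shows "1 \<le> nat \<lfloor>x\<rfloor>" "real (nat \<lfloor>x\<rfloor>) \<le> x" "x / 2 \<le> real (nat \<lfloor>x\<rfloor>)"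
proof -
  have "1 \<le> \<lfloor>x\<rfloor>" "real_of_int \<lfloor>x\<rfloor> \<le> x" "x < real_of_int \<lfloor>x\<rfloor> + 1" using assms by linarith+
  then show "1 \<le> nat \<lfloor>x\<rfloor>" "real (nat \<lfloor>x\<rfloor>) \<le> x" "x / 2 \<le> real (nat \<lfloor>x\<rfloor>)" by linarith+
qed

lemma count_space_disjoint_pieces:
  fixes g :: "nat \<Rightarrow> 'a"
  assumes g: "inj g" and m: "1 \<le> m"
  shows "disjoint_pieces (count_space UNIV :: 'a measure) n m"
proof -
  define j where "j = nat \<lfloor>m\<rfloor>"
  have j: "m / 2 \<le> real j" "real j \<le> m" using nat_floor_bounds[OF m] by (simp_all add: j_def)
  define F where "F k = g ` {(k - 1) * j ..< k * j}" for k
  have "card (F k) = j" if "1 \<le> k" for k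
    using that g by (auto simp: F_def card_image inj_on_subset diff_mult_distrib)
  then have "measure (count_space UNIV) (F k) = real j" if "1 \<le> k" for k
    using that by (simp add: F_def measure_count_space)
  moreover have "disjoint_family_on F {1..n}"
    unfolding disjoint_family_on_def
  proof (intro ballI impI)
    fix a b :: nat assume ab: "a \<in> {1..n}" "b \<in> {1..n}" "a \<noteq> b"
    have "{(a - 1) * j ..< a * j} \<inter> {(b - 1) * j ..< b * j} = {}"
    proof (cases "a < b")
      case True
      then have "a * j \<le> (b - 1) * j" by (intro mult_right_mono) auto
      then show ?thesis by auto
    next
      case False
      then have "b * j \<le> (a - 1) * j" using ab by (intro mult_right_mono) auto
      then show ?thesis by auto
    qed
    then show "F a \<inter> F b = {}" unfolding F_def by (simp add: image_Int[OF g, symmetric])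
  qed
  ultimately show ?thesis
    unfolding disjoint_pieces_def using j
    by (intro exI[of _ F]) (auto simp: F_def fmeasurable_def of_nat_less_top)
qed

section \<open>Type p implies \<Delta>^(*p)\<close>

lemma orlicz_modular_indicator:
  assumes "orlicz_function \<phi>" "S \<in> sets M"
  shows "orlicz_modular M \<phi> (indicator S) e = ennreal (\<phi> (1 / e)) * emeasure M S"
proof -
  have "orlicz_modular M \<phi> (indicator S) e = (\<integral>\<^sup>+ x. ennreal (\<phi> (1 / e)) * indicator S x \<partial>M)"
    using assms(1) by (intro nn_integral_cong) (simp add: orlicz_function_zero split: split_indicator)
  then show ?thesis using assms(2) by (simp add: nn_integral_cmult_indicator)
qed

lemma indicator_in_orlicz_space:
  assumes "orlicz_function \<phi>" "S \<in> fmeasurable M"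
  shows "indicator S \<in> orlicz_space M \<phi>"
proof -
  have "S \<in> sets M" "emeasure M S < \<infinity>" using assms(2) by (auto simp: fmeasurable_def)
  then show ?thesis
    using orlicz_modular_indicator[OF assms(1), of S M 1]
    unfolding orlicz_space_def by (auto simp: ennreal_mult_less_top intro!: exI[of _ 1])
qed

lemma orlicz_norm_indicator_le:
  assumes "orlicz_function \<phi>" "S \<in> fmeasurable M" "0 < s" "\<phi> s * measure M S \<le> 1"
  shows "orlicz_norm M \<phi> (indicator S) \<le> 1 / s"
proof (rule orlicz_norm_le)
  have "orlicz_modular M \<phi> (indicator S) (1 / s) = ennreal (\<phi> (1 / (1 / s))) * emeasure M S"
    using assms(1,2) by (intro orlicz_modular_indicator) (auto simp: fmeasurable_def)
  also have "\<dots> = ennreal (\<phi> s * measure M S)"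
    using assms(2) orlicz_function_nonneg[OF assms(1), of s] assms(3)
    by (simp add: emeasure_eq_measure2 ennreal_mult)
  finally show "orlicz_modular M \<phi> (indicator S) (1 / s) \<le> 1" using assms(4) by simp
qed (use assms in simp)

lemma measure_le_if_orlicz_norm_indicator_less:
  assumes \<phi>: "orlicz_function \<phi>" and S: "S \<in> fmeasurable M" and e: "orlicz_norm M \<phi> (indicator S) < e"
  shows "\<phi> (1 / e) * measure M S \<le> 1"
proof -
  have "0 < e"
    using e orlicz_norm_nonneg[OF \<phi> indicator_in_orlicz_space[OF \<phi> S]] by linarith
  have "orlicz_modular M \<phi> (indicator S) e = ennreal (\<phi> (1 / e)) * emeasure M S"
    using S by (intro orlicz_modular_indicator[OF \<phi>]) (auto simp: fmeasurable_def)
  then have "ennreal (\<phi> (1 / e)) * emeasure M S \<le> 1"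
    using orlicz_modular_le_1[OF \<phi> indicator_in_orlicz_space[OF \<phi> S] e] by simp
  then show ?thesis
    using S \<open>0 < e\<close> orlicz_function_nonneg[OF \<phi>, of "1 / e"]
    by (simp add: emeasure_eq_measure2 ennreal_mult[symmetric] ennreal_le_1)
qed

lemma abs_sum_signs_indicator:
  fixes \<epsilon> :: "'b \<Rightarrow> real"
  assumes "finite I" "disjoint_family_on F I" "\<And>k. k \<in> I \<Longrightarrow> \<bar>\<epsilon> k\<bar> = 1"
  shows "\<bar>\<Sum>k\<in>I. \<epsilon> k * indicator (F k) x\<bar> = indicator (\<Union>k\<in>I. F k) x"
proof (cases "\<exists>k\<in>I. x \<in> F k")
  case True
  then obtain k0 where k0: "k0 \<in> I" "x \<in> F k0" by blast
  have "x \<notin> F k" if "k \<in> I" "k \<noteq> k0" for k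
    using assms(2) k0 that unfolding disjoint_family_on_def by blast
  then have "(\<Sum>k\<in>I. \<epsilon> k * indicator (F k) x) = (\<Sum>k\<in>I. if k = k0 then \<epsilon> k0 else 0)"
    using k0 by (intro sum.cong) auto
  then show ?thesis using assms(1,3) k0 by (auto split: split_indicator)
qed (auto intro!: sum.neutral)

lemma has_type_disjoint_indicators:
  assumes \<phi>: "orlicz_function \<phi>" and "has_type (orlicz_space M \<phi>) (orlicz_norm M \<phi>) p"
  obtains K where "0 < K" "\<And>n (F :: nat \<Rightarrow> 'a set). disjoint_family_on F {1..n} \<Longrightarrow> (\<And>k. k \<in> {1..n} \<Longrightarrow> F k \<in> fmeasurable M) \<Longrightarrow>
    orlicz_norm M \<phi> (indicator (\<Union>k\<in>{1..n}. F k))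
      \<le> K * (\<Sum>k=1..n. orlicz_norm M \<phi> (indicator (F k)) powr p) powr (1 / p)"
proof -
  let ?N = "orlicz_norm M \<phi>"
  obtain K where K: "0 < K" and type: "\<And>n (x :: nat \<Rightarrow> 'a \<Rightarrow> real). \<forall>k\<in>{1..n}. x k \<in> orlicz_space M \<phi> \<Longrightarrow>
      (\<integral>\<^sup>+ t. ennreal (?N (\<lambda>\<omega>. \<Sum>k=1..n. rademacher k t * x k \<omega>)) * indicator {0..1} t \<partial>lborel)
        \<le> ennreal (K * (\<Sum>k=1..n. ?N (x k) powr p) powr (1 / p))"
    using assms(2) unfolding has_type_def by blast
  have "?N (indicator (\<Union>k\<in>{1..n}. F k)) \<le> K * (\<Sum>k=1..n. ?N (indicator (F k)) powr p) powr (1 / p)"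
    if F: "disjoint_family_on F {1..n}" "\<And>k. k \<in> {1..n} \<Longrightarrow> F k \<in> fmeasurable M"
    for n and F :: "nat \<Rightarrow> 'a set"
  proof -
    let ?U = "\<Union>k\<in>{1..n}. F k"
    have "AE t in lborel. ennreal (?N (indicator ?U)) * indicator {0..1::real} t
        = ennreal (?N (\<lambda>\<omega>. \<Sum>k=1..n. rademacher k t * indicator (F k) \<omega>)) * indicator {0..1} t"
      using AE_abs_rademacher
    proof eventually_elim
      case (elim t)
      have "?N (\<lambda>\<omega>. \<Sum>k=1..n. rademacher k t * indicator (F k) \<omega>) = ?N (indicator ?U)"
        using abs_sum_signs_indicator[OF _ F(1), of "\<lambda>k. rademacher k t"] elim
        by (intro orlicz_norm_cong_abs) simp
      then show ?case by simp
    qed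
    then have "ennreal (?N (indicator ?U))
        = (\<integral>\<^sup>+ t. ennreal (?N (\<lambda>\<omega>. \<Sum>k=1..n. rademacher k t * indicator (F k) \<omega>)) * indicator {0..1} t \<partial>lborel)"
      by (subst nn_integral_cong_AE[symmetric]) (auto simp: nn_integral_cmult_indicator)
    also have "\<dots> \<le> ennreal (K * (\<Sum>k=1..n. ?N (indicator (F k)) powr p) powr (1 / p))"
      using F(2) by (intro type) (simp add: indicator_in_orlicz_space[OF \<phi>])
    finally show ?thesis using K by (simp add: ennreal_le_iff)
  qed
  with K show thesis by (rule that)
qed

lemma orlicz_norm_indicators_powr_sum_le:
  assumes \<phi>: "orlicz_function \<phi>" and p: "0 < p" and s: "0 < s"
    and F: "\<And>k. k \<in> I \<Longrightarrow> F k \<in> fmeasurable M" "\<And>k. k \<in> I \<Longrightarrow> \<phi> s * measure M (F k) \<le> 1"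
  shows "(\<Sum>k\<in>I. orlicz_norm M \<phi> (indicator (F k)) powr p) powr (1 / p) \<le> real (card I) powr (1 / p) / s"
proof -
  have "orlicz_norm M \<phi> (indicator (F k)) \<le> 1 / s" if "k \<in> I" for k
    using F[OF that] s by (intro orlicz_norm_indicator_le[OF \<phi>])
  then have "(\<Sum>k\<in>I. orlicz_norm M \<phi> (indicator (F k)) powr p) \<le> (\<Sum>k\<in>I. (1 / s) powr p)"
    using p F(1) orlicz_norm_nonneg[OF \<phi> indicator_in_orlicz_space[OF \<phi>]]
    by (intro sum_mono powr_mono2) auto
  then have "(\<Sum>k\<in>I. orlicz_norm M \<phi> (indicator (F k)) powr p) powr (1 / p)
      \<le> (real (card I) * (1 / s) powr p) powr (1 / p)"
    using p by (intro powr_mono2) (auto intro: sum_nonneg)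
  also have "\<dots> = real (card I) powr (1 / p) / s"
    using p s by (simp add: powr_mult powr_powr powr_divide)
  finally show ?thesis .
qed

lemma has_type_pieces_bound:
  assumes \<phi>: "orlicz_function \<phi>" and p: "0 < p"
    and "has_type (orlicz_space M \<phi>) (orlicz_norm M \<phi>) p"
  obtains L where "0 < L" "\<And>a u n. 1 \<le> a \<Longrightarrow> 0 < u \<Longrightarrow> 1 \<le> n \<Longrightarrow> real n \<le> (a / L) powr p \<Longrightarrow>
    disjoint_pieces M n (1 / \<phi> (a * u)) \<Longrightarrow> real n * \<phi> u \<le> 2 * \<phi> (a * u)"
proof -
  let ?N = "orlicz_norm M \<phi>"
  obtain K where K: "0 < K" and type: "\<And>n (F :: nat \<Rightarrow> 'a set). disjoint_family_on F {1..n} \<Longrightarrow>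
      (\<And>k. k \<in> {1..n} \<Longrightarrow> F k \<in> fmeasurable M) \<Longrightarrow>
      ?N (indicator (\<Union>k\<in>{1..n}. F k)) \<le> K * (\<Sum>k=1..n. ?N (indicator (F k)) powr p) powr (1 / p)"
    using has_type_disjoint_indicators[OF assms(1,3)] by blast
  have "real n * \<phi> u \<le> 2 * \<phi> (a * u)"
    if a: "1 \<le> a" and u: "0 < u" and n: "1 \<le> n" "real n \<le> (a / (2 * K)) powr p"
      and pieces: "disjoint_pieces M n (1 / \<phi> (a * u))" for a u n
  proof -
    define s where "s = a * u"
    have s: "0 < s" "0 < \<phi> s" using a u orlicz_function_pos[OF \<phi>] by (auto simp: s_def)
    obtain F where F: "disjoint_family_on F {1..n}" and F_meas: "\<And>k. k \<in> {1..n} \<Longrightarrow> F k \<in> fmeasurable M"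
      and F_size: "\<And>k. k \<in> {1..n} \<Longrightarrow> 1 / \<phi> s / 2 \<le> measure M (F k) \<and> measure M (F k) \<le> 1 / \<phi> s"
      using pieces unfolding disjoint_pieces_def s_def by blast
    define U where "U = (\<Union>k\<in>{1..n}. F k)"
    have sum_le: "(\<Sum>k=1..n. ?N (indicator (F k)) powr p) powr (1 / p) \<le> real n powr (1 / p) / s"
      using F_size s F_meas
      by (intro order_trans[OF orlicz_norm_indicators_powr_sum_le[OF \<phi> p s(1)]]) (auto simp: field_simps)
    define e where "e = 2 * K * real n powr (1 / p)"
    have e: "0 < e" using K n by (simp add: e_def)
    have "?N (indicator U) \<le> K * (\<Sum>k=1..n. ?N (indicator (F k)) powr p) powr (1 / p)"
      unfolding U_def by (rule type[OF F F_meas])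
    also have "\<dots> \<le> K * (real n powr (1 / p) / s)" using sum_le K by (intro mult_left_mono) auto
    also have "\<dots> < e / s" using K s n by (simp add: e_def divide_strict_right_mono)
    finally have "\<phi> (1 / (e / s)) * measure M U \<le> 1"
      using F_meas unfolding U_def by (intro measure_le_if_orlicz_norm_indicator_less[OF \<phi>]) auto
    then have "\<phi> (s / e) * measure M U \<le> 1" by simp
    moreover have "real n / (2 * \<phi> s) \<le> measure M U"
    proof -
      have "measure M U = (\<Sum>k=1..n. measure M (F k))"
        unfolding U_def using F F_meas
        by (intro measure_UNION') (auto simp: pairwise_def disjnt_def disjoint_family_on_def)
      also have "\<dots> \<ge> (\<Sum>k=1..n. 1 / \<phi> s / 2)" using F_size by (intro sum_mono) auto
      finally show ?thesis by simp
    qed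
    ultimately have "\<phi> (s / e) * (real n / (2 * \<phi> s)) \<le> 1"
      using orlicz_function_nonneg[OF \<phi>, of "s / e"] s e
      by (meson divide_nonneg_pos less_imp_le mult_left_mono order_trans)
    then have "real n * \<phi> (s / e) \<le> 2 * \<phi> s" using s by (simp add: field_simps)
    moreover have "real n powr (1 / p) \<le> ((a / (2 * K)) powr p) powr (1 / p)"
      using n p by (intro powr_mono2) auto
    then have "e \<le> a" using a K p by (simp add: e_def powr_powr field_simps)
    then have "\<phi> u \<le> \<phi> (s / e)"
      using u e by (intro orlicz_function_mono[OF \<phi>]) (auto simp: s_def field_simps mult_right_mono)
    ultimately show ?thesis
      using n by (smt (verit) mult_left_mono of_nat_0_le_iff s_def)
  qed
  then show thesis using K by (intro that[of "2 * K"]) auto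
qed

lemma growth_from_pieces:
  assumes \<phi>: "orlicz_function \<phi>" and p: "0 < p" and L: "0 < L" and a: "1 \<le> a" and u: "0 \<le> u"
    and pieces: "\<And>n. 1 \<le> n \<Longrightarrow> real n \<le> (a / L) powr p \<Longrightarrow> 0 < u \<Longrightarrow> real n * \<phi> u \<le> 2 * \<phi> (a * u)"
  shows "1 / (4 * L powr p) * a powr p * \<phi> u \<le> \<phi> (a * u)"
proof (cases "u = 0")
  case False
  define x where "x = (a / L) powr p"
  have x: "1 / (4 * L powr p) * a powr p = x / 4" using L a by (simp add: x_def powr_divide)
  have "\<phi> u \<le> \<phi> (a * u)"
    using u a mult_right_mono[OF a u] by (intro orlicz_function_mono[OF \<phi>]) auto
  moreover have "0 \<le> \<phi> u" using orlicz_function_nonneg[OF \<phi> u] .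
  moreover have "x / 4 * \<phi> u \<le> \<phi> (a * u)" if "1 \<le> x"
  proof -
    have "real (nat \<lfloor>x\<rfloor>) * \<phi> u \<le> 2 * \<phi> (a * u)"
      using nat_floor_bounds[OF that] False u by (intro pieces) (auto simp: x_def)
    moreover have "x / 2 * \<phi> u \<le> real (nat \<lfloor>x\<rfloor>) * \<phi> u"
      using nat_floor_bounds[OF that] orlicz_function_nonneg[OF \<phi> u] by (intro mult_right_mono) auto
    ultimately show ?thesis by simp
  qed
  ultimately show ?thesis unfolding x
    by (cases "1 \<le> x") (auto intro: order_trans[OF mult_left_le_one_le] simp: x_def)
qed (simp add: orlicz_function_zero[OF \<phi>])

lemma finite_nonatomic_disjoint_pieces:
  assumes \<phi>: "orlicz_function \<phi>" and na: "nonatomic M"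
    and T: "0 < T" "emeasure M (space M) = ennreal T" and a: "1 \<le> a" and u: "0 < u" "4 < T * \<phi> u"
    and bound: "\<And>n. 1 \<le> n \<Longrightarrow> real n \<le> x \<Longrightarrow> disjoint_pieces M n (1 / \<phi> (a * u)) \<Longrightarrow>
      real n * \<phi> u \<le> 2 * \<phi> (a * u)"
    and n: "real n \<le> x"
  shows "disjoint_pieces M n (1 / \<phi> (a * u))"
proof -
  have "0 < \<phi> (a * u)" using a u by (intro orlicz_function_pos[OF \<phi>]) simp
  have pieces: "disjoint_pieces M k (1 / \<phi> (a * u))" if "real k \<le> T * \<phi> (a * u)" for k
  proof (rule nonatomic_disjoint_pieces[OF na])
    show "0 < 1 / \<phi> (a * u)" using \<open>0 < \<phi> (a * u)\<close> by simp
    have "real k * (1 / \<phi> (a * u)) \<le> T" using that \<open>0 < \<phi> (a * u)\<close> by (simp add: field_simps)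
    then show "ennreal (real k * (1 / \<phi> (a * u))) \<le> emeasure M (space M)"
      using T by (simp add: ennreal_leI)
  qed
  have "T * \<phi> u \<le> T * \<phi> (a * u)"
    using T u a by (intro mult_left_mono orlicz_function_mono[OF \<phi>]) auto
  \<comment> \<open>Otherwise the bound for the largest number of pieces that fit forces \<open>T * \<phi> u \<le> 4\<close>.\<close>
  have "x \<le> T * \<phi> (a * u)"
  proof (rule ccontr)
    assume "\<not> x \<le> T * \<phi> (a * u)"
    define n1 where "n1 = nat \<lfloor>T * \<phi> (a * u)\<rfloor>"
    have n1: "1 \<le> n1" "real n1 \<le> T * \<phi> (a * u)" "T * \<phi> (a * u) / 2 \<le> real n1"
      using nat_floor_bounds[of "T * \<phi> (a * u)"] u \<open>T * \<phi> u \<le> _\<close> by (auto simp: n1_def)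
    have "real n1 * \<phi> u \<le> 2 * \<phi> (a * u)"
      using n1 \<open>\<not> _\<close> by (intro bound pieces) auto
    moreover have "T * \<phi> (a * u) / 2 * \<phi> u \<le> real n1 * \<phi> u"
      using n1(3) orlicz_function_nonneg[OF \<phi>, of u] u by (intro mult_right_mono) auto
    ultimately have "\<phi> (a * u) * (T * \<phi> u) \<le> \<phi> (a * u) * 4" by (simp add: algebra_simps)
    then show False using \<open>0 < \<phi> (a * u)\<close> u by simp
  qed
  then show ?thesis using n by (intro pieces) simp
qed

lemma has_type_imp_delta_star:
  assumes ms: "measure_setting c M" and p: "0 < p" and \<phi>: "orlicz_function \<phi>"
    and "has_type (orlicz_space M \<phi>) (orlicz_norm M \<phi>) p"
  shows "delta_star c p \<phi>"
proof -
  obtain L where L: "0 < L" and pieces_bound: "\<And>a u n. 1 \<le> a \<Longrightarrow> 0 < u \<Longrightarrow> 1 \<le> n \<Longrightarrow>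
      real n \<le> (a / L) powr p \<Longrightarrow> disjoint_pieces M n (1 / \<phi> (a * u)) \<Longrightarrow> real n * \<phi> u \<le> 2 * \<phi> (a * u)"
    using has_type_pieces_bound[OF \<phi> p assms(4)] by blast
  define K where "K = 1 / (4 * L powr p)"
  have "0 < K" using L by (simp add: K_def)
  have \<phi>_au: "0 < \<phi> (a * u)" if "1 \<le> a" "0 < u" for a u
    using that by (intro orlicz_function_pos[OF \<phi>]) simp
  have "growth_cond c \<phi> K p"
  proof (cases c)
    case CaseA
    have "nonatomic M" "emeasure M (space M) = \<infinity>" using ms by (auto simp: CaseA measure_setting_def)
    then have "K * a powr p * \<phi> u \<le> \<phi> (a * u)" if "1 \<le> a" "0 \<le> u" for a u
      unfolding K_def using that \<phi>_au[OF that(1)]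
      by (intro growth_from_pieces[OF \<phi> p L] pieces_bound nonatomic_disjoint_pieces) auto
    then show ?thesis by (simp add: CaseA growth_cond_def)
  next
    case CaseB
    have na: "nonatomic M" using ms by (simp add: CaseB measure_setting_def)
    obtain T where T: "0 < T" "emeasure M (space M) = ennreal T"
      using ms by (cases "emeasure M (space M)") (auto simp: CaseB measure_setting_def)
    obtain v where v: "0 < v" "4 / T < \<phi> v" using orlicz_function_large[OF \<phi>] .
    have "K * a powr p * \<phi> u \<le> \<phi> (a * u)" if a: "1 \<le> a" and u: "v \<le> u" for a u
      unfolding K_def using a u v(1)
    proof (intro growth_from_pieces[OF \<phi> p L] pieces_bound)
      fix n :: nat assume n: "1 \<le> n" "real n \<le> (a / L) powr p"
      have "4 < T * \<phi> v" using v T by (simp add: field_simps)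
      also have "\<dots> \<le> T * \<phi> u" using T u v by (intro mult_left_mono orlicz_function_mono[OF \<phi>]) auto
      finally have "4 < T * \<phi> u" .
      moreover have "0 < u" using u v by simp
      ultimately show "disjoint_pieces M n (1 / \<phi> (a * u))"
        using pieces_bound[OF a] by (intro finite_nonatomic_disjoint_pieces[OF \<phi> na T a _ _ _ n(2)])
    qed auto
    then show ?thesis using v(1) by (auto simp: CaseB growth_cond_def intro!: exI[of _ v])
  next
    case CaseC
    obtain g :: "nat \<Rightarrow> 'a" where "bij g" and M: "M = count_space UNIV"
      using ms by (auto simp: CaseC measure_setting_def)
    obtain d where d: "0 < d" "\<And>x. 0 \<le> x \<Longrightarrow> x \<le> d \<Longrightarrow> \<phi> x < 1"
      using orlicz_function_small[OF \<phi>, of 1] by auto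
    have "K * a powr p * \<phi> u \<le> \<phi> (a * u)" if "1 \<le> a" "0 < u" "a * u \<le> d" for a u
      unfolding K_def using that \<open>bij g\<close> d(2)[of "a * u"] \<phi>_au[OF that(1,2)]
      by (intro growth_from_pieces[OF \<phi> p L] pieces_bound)
        (auto simp: M intro!: count_space_disjoint_pieces[OF bij_is_inj[OF \<open>bij g\<close>]])
    then show ?thesis using d(1) by (auto simp: CaseC growth_cond_def intro!: exI[of _ d])
  qed
  with \<open>0 < K\<close> show ?thesis by (auto simp: delta_star_def)
qed

theorem mainTheorem11:
  fixes M :: "'a measure" and \<phi> :: "real \<Rightarrow> real" and p :: real and c :: mcase
  assumes "measure_setting c M"
    and "0 < p" and "p \<le> 1"
    and "orlicz_function \<phi>"
    and "alpha_index c \<phi> > 0"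
  shows "(delta_star c p \<phi> \<longleftrightarrow> p_normable (orlicz_space M \<phi>) (orlicz_norm M \<phi>) p)
       \<and> (p_normable (orlicz_space M \<phi>) (orlicz_norm M \<phi>) p
            \<longleftrightarrow> has_type (orlicz_space M \<phi>) (orlicz_norm M \<phi>) p)"
  using delta_star_imp_p_normable[OF assms(1-4)] p_normable_imp_has_type[OF assms(4)]
    has_type_imp_delta_star[OF assms(1,2,4)] by blast

end
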